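(* Let $\mathcal{T}=(V,A,E,f,q,v_0)$ be a decorated pseudo-rooted tree such that $f(\alpha)=1$ for all $\alpha\in A\setminus A_0$. Then $M(\mathcal{T}_\alpha)-M_\alpha(\mathcal{T})=I(\alpha)$ for every $\alpha\in A\setminus A_0$.
   Context: A graph is a pair $(X_0,X_1)$ of finite sets such that each element of $X_1$ (an edge) is a $2$-element subset of $X_0$; elements of $X_0$ are cells. The valency $\delta_x$ of a cell is the number of edges containing it. A path is a tuple $(x_0,\dots,x_n)$ ($n\ge0$) of cells with $\{x_i,x_{i+1}\}$ an edge for each $i<n$, these edges pairwise distinct; a cell/edge is in the path if it is some $x_i$ / some $\{x_i,x_{i+1}\}$. The graph is a tree if any two cells $x,y$ are joined by a unique path $\gamma_{x,y}$. A decorated tree is $(V,A,E,f,q)$ with $V$ (vertices), $A$ (arrows) finite disjoint sets, $(V\cup A,E)$ a tree, every arrow of valency $1$, $f:A\to\mathbb{Z}$, $q(e,x)\in\mathbb{Z}$ for each $e\in E$, $x\in e$, with $q(e,\alpha)=1$ for $\alpha\in A$, and for each $v\in V$ and distinct edges $e,e'\ni v$, $\gcd(q(e,v),q(e',v))=1$. $A_0=\{\alpha\in A:f(\alpha)=0\}$. An edge $\varepsilon$ is incident to a path $\gamma$ if it is not in $\gamma$ but contains a cell $u$ of $\gamma$; $q(\varepsilon,\gamma):=q(\varepsilon,u)$. For $v\ne\alpha$, $v\in V\cup A$, $\alpha\in A$: $x_{v,\alpha}=f(\alpha)\prod_\varepsilon q(\varepsilon,\gamma_{v,\alpha})$ over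 edges incident to $\gamma_{v,\alpha}$ (empty product $=1$). For $v\in V\cup A_0$, $N_v=\sum_{\alpha\in A\setminus A_0}x_{v,\alpha}$; $M(\mathcal{T})=-\sum_{v\in V\cup A_0}N_v(\delta_v-2)$. For $\alpha\in A\setminus A_0$, $M_\alpha(\mathcal{T})=-\sum_{v\in V\cup A_0}x_{v,\alpha}(\delta_v-2)$. For a path $\gamma=(x_0,\dots,x_n)$, $n>0$, and a cell $u$ of $\gamma$, $Q(\gamma,u)=\prod q(\varepsilon,u)$ over edges $\varepsilon\ni u$ not in $\gamma$; $Q^*(\gamma)=\prod_{0<i<n}Q(\gamma,x_i)$. For $\alpha\in A\setminus A_0$, $I(\alpha)=\sum_{\beta\in(A\setminus A_0)\setminus\{\alpha\}}Q^*(\gamma_{\alpha,\beta})f(\alpha)f(\beta)$. A pseudo-root of $(V,A,E,f,q)$ is a vertex $v_0$ with $q(e,v_0)=1$ for all edges $e\ni v_0$, such that for every $v\in V\setminus\{v_0\}$ at most one edge $e\ni v$ not in $\gamma_{v_0,v}$ has $q(e,v)\ne1$. A decorated pseudo-rooted tree is $(V,A,E,f,q,v_0)$ with $v_0$ a pseudo-root. For nonempty $X\subseteq A\setminus A_0$, $\mathcal{T}_X$: let $\mathcal{T}'_X$ have arrow set $X$, vertices those of $\mathcal{T}$ on some $\gamma_{v_0,\alpha}$ ($\alpha\in X$), edges those of $\mathcal{T}$ in some $\gamma_{v_0,\alpha}$ ($\alpha\in X$), decorations as in $\mathcal{T}$; for each vertex $v$ of $\mathcal{T}'_X$ put $b_v=\prod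 q(e,v)$ over edges $e$ of $\mathcal{T}$ containing $v$ not in $\mathcal{T}'_X$, and if $b_v\ne1$ add an arrow $\alpha_v$ with $f(\alpha_v)=0$ and edge $\{v,\alpha_v\}$ decorated $b_v$ near $v$, $1$ near $\alpha_v$. The result, pseudo-rooted at $v_0$, is $\mathcal{T}_X$; $\mathcal{T}_\alpha:=\mathcal{T}_{\{\alpha\}}$. *)

theory Defs
  imports Main
begin

definition is_graph :: "'a set \<Rightarrow> 'a set set \<Rightarrow> bool" where
  "is_graph X0 X1 \<longleftrightarrow> finite X0 \<and> finite X1 \<and> (\<forall>e\<in>X1. e \<subseteq> X0 \<and> card e = 2)"

definition valency :: "'a set set \<Rightarrow> 'a \<Rightarrow> int" where
  "valency X1 x = int (card {e\<in>X1. x \<in> e})"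

definition path_edges :: "'a list \<Rightarrow> 'a set list" where
  "path_edges xs = map (\<lambda>i. {xs ! i, xs ! Suc i}) [0..<length xs - 1]"

definition is_path :: "'a set \<Rightarrow> 'a set set \<Rightarrow> 'a list \<Rightarrow> bool" where
  "is_path X0 X1 xs \<longleftrightarrow> xs \<noteq> [] \<and> set xs \<subseteq> X0 \<and>
     set (path_edges xs) \<subseteq> X1 \<and> distinct (path_edges xs)"

definition is_tree :: "'a set \<Rightarrow> 'a set set \<Rightarrow> bool" where
  "is_tree X0 X1 \<longleftrightarrow> is_graph X0 X1 \<and>
     (\<forall>x\<in>X0. \<forall>y\<in>X0. \<exists>!p. is_path X0 X1 p \<and> hd p = x \<and> last p = y)"

definition gpath :: "'a set \<Rightarrow> 'a set set \<Rightarrow> 'a \<Rightarrow> 'a \<Rightarrow> 'a list" where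
  "gpath X0 X1 x y = (THE p. is_path X0 X1 p \<and> hd p = x \<and> last p = y)"

definition decorated_tree ::
  "'a set \<Rightarrow> 'a set \<Rightarrow> 'a set set \<Rightarrow> ('a \<Rightarrow> int) \<Rightarrow> ('a set \<Rightarrow> 'a \<Rightarrow> int) \<Rightarrow> bool" where
  "decorated_tree V A E f q \<longleftrightarrow>
     finite V \<and> finite A \<and> V \<inter> A = {} \<and> is_tree (V \<union> A) E \<and>
     (\<forall>\<alpha>\<in>A. valency E \<alpha> = 1) \<and>
     (\<forall>e\<in>E. \<forall>\<alpha>\<in>A. \<alpha> \<in> e \<longrightarrow> q e \<alpha> = 1) \<and>
     (\<forall>v\<in>V. \<forall>e\<in>E. \<forall>e'\<in>E. v \<in> e \<and> v \<in> e' \<and> e \<noteq> e' \<longrightarrow> gcd (q e v) (q e' v) = 1)"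

definition A0 :: "'a set \<Rightarrow> ('a \<Rightarrow> int) \<Rightarrow> 'a set" where
  "A0 A f = {\<alpha>\<in>A. f \<alpha> = 0}"

definition incident_edges :: "'a set set \<Rightarrow> 'a list \<Rightarrow> 'a set set" where
  "incident_edges E \<gamma> = {\<epsilon>\<in>E. \<epsilon> \<notin> set (path_edges \<gamma>) \<and> (\<exists>u\<in>set \<gamma>. u \<in> \<epsilon>)}"

definition q_path :: "('a set \<Rightarrow> 'a \<Rightarrow> int) \<Rightarrow> 'a set \<Rightarrow> 'a list \<Rightarrow> int" where
  "q_path q \<epsilon> \<gamma> = q \<epsilon> (THE u. u \<in> set \<gamma> \<and> u \<in> \<epsilon>)"

definition xval ::
  "'a set \<Rightarrow> 'a set \<Rightarrow> 'a set set \<Rightarrow> ('a \<Rightarrow> int) \<Rightarrow> ('a set \<Rightarrow> 'a \<Rightarrow> int) \<Rightarrow> 'a \<Rightarrow> 'a \<Rightarrow> int" where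
  "xval V A E f q v \<alpha> =
     (let \<gamma> = gpath (V \<union> A) E v \<alpha> in f \<alpha> * (\<Prod>\<epsilon>\<in>incident_edges E \<gamma>. q_path q \<epsilon> \<gamma>))"

definition Nval ::
  "'a set \<Rightarrow> 'a set \<Rightarrow> 'a set set \<Rightarrow> ('a \<Rightarrow> int) \<Rightarrow> ('a set \<Rightarrow> 'a \<Rightarrow> int) \<Rightarrow> 'a \<Rightarrow> int" where
  "Nval V A E f q v = (\<Sum>\<alpha>\<in>A - A0 A f. xval V A E f q v \<alpha>)"

definition Mval ::
  "'a set \<Rightarrow> 'a set \<Rightarrow> 'a set set \<Rightarrow> ('a \<Rightarrow> int) \<Rightarrow> ('a set \<Rightarrow> 'a \<Rightarrow> int) \<Rightarrow> int" where
  "Mval V A E f q = - (\<Sum>v\<in>V \<union> A0 A f. Nval V A E f q v * (valency E v - 2))"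

definition Malpha ::
  "'a set \<Rightarrow> 'a set \<Rightarrow> 'a set set \<Rightarrow> ('a \<Rightarrow> int) \<Rightarrow> ('a set \<Rightarrow> 'a \<Rightarrow> int) \<Rightarrow> 'a \<Rightarrow> int" where
  "Malpha V A E f q \<alpha> = - (\<Sum>v\<in>V \<union> A0 A f. xval V A E f q v \<alpha> * (valency E v - 2))"

definition Qcell :: "'a set set \<Rightarrow> ('a set \<Rightarrow> 'a \<Rightarrow> int) \<Rightarrow> 'a list \<Rightarrow> 'a \<Rightarrow> int" where
  "Qcell E q \<gamma> u = (\<Prod>\<epsilon>\<in>{\<epsilon>\<in>E. u \<in> \<epsilon> \<and> \<epsilon> \<notin> set (path_edges \<gamma>)}. q \<epsilon> u)"

definition Qstar :: "'a set set \<Rightarrow> ('a set \<Rightarrow> 'a \<Rightarrow> int) \<Rightarrow> 'a list \<Rightarrow> int" where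
  "Qstar E q \<gamma> = (\<Prod>i\<in>{1..<length \<gamma> - 1}. Qcell E q \<gamma> (\<gamma> ! i))"

definition Ival ::
  "'a set \<Rightarrow> 'a set \<Rightarrow> 'a set set \<Rightarrow> ('a \<Rightarrow> int) \<Rightarrow> ('a set \<Rightarrow> 'a \<Rightarrow> int) \<Rightarrow> 'a \<Rightarrow> int" where
  "Ival V A E f q \<alpha> =
     (\<Sum>\<beta>\<in>(A - A0 A f) - {\<alpha>}. Qstar E q (gpath (V \<union> A) E \<alpha> \<beta>) * f \<alpha> * f \<beta>)"

definition pseudo_root ::
  "'a set \<Rightarrow> 'a set \<Rightarrow> 'a set set \<Rightarrow> ('a set \<Rightarrow> 'a \<Rightarrow> int) \<Rightarrow> 'a \<Rightarrow> bool" where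
  "pseudo_root V A E q v0 \<longleftrightarrow> v0 \<in> V \<and> (\<forall>e\<in>E. v0 \<in> e \<longrightarrow> q e v0 = 1) \<and>
     (\<forall>v\<in>V - {v0}. card {e\<in>E. v \<in> e \<and> e \<notin> set (path_edges (gpath (V \<union> A) E v0 v)) \<and> q e v \<noteq> 1} \<le> 1)"

definition decorated_pseudo_rooted_tree ::
  "'a set \<Rightarrow> 'a set \<Rightarrow> 'a set set \<Rightarrow> ('a \<Rightarrow> int) \<Rightarrow> ('a set \<Rightarrow> 'a \<Rightarrow> int) \<Rightarrow> 'a \<Rightarrow> bool" where
  "decorated_pseudo_rooted_tree V A E f q v0 \<longleftrightarrow>
     decorated_tree V A E f q \<and> pseudo_root V A E q v0"

text \<open>T_X lives on the cell type 'a + 'a: Inl c is the cell c of T, and Inr v is the new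
  arrow alpha_v attached to the vertex v (present iff b_v \<noteq> 1).\<close>

definition sub_vertices :: "'a set \<Rightarrow> 'a set \<Rightarrow> 'a set set \<Rightarrow> 'a \<Rightarrow> 'a set \<Rightarrow> 'a set" where
  "sub_vertices V A E v0 X = {v\<in>V. \<exists>\<alpha>\<in>X. v \<in> set (gpath (V \<union> A) E v0 \<alpha>)}"

definition sub_edges :: "'a set \<Rightarrow> 'a set \<Rightarrow> 'a set set \<Rightarrow> 'a \<Rightarrow> 'a set \<Rightarrow> 'a set set" where
  "sub_edges V A E v0 X = {e\<in>E. \<exists>\<alpha>\<in>X. e \<in> set (path_edges (gpath (V \<union> A) E v0 \<alpha>))}"

definition bval :: "'a set \<Rightarrow> 'a set \<Rightarrow> 'a set set \<Rightarrow> ('a set \<Rightarrow> 'a \<Rightarrow> int) \<Rightarrow> 'a \<Rightarrow> 'a set \<Rightarrow> 'a \<Rightarrow> int" where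
  "bval V A E q v0 X v = (\<Prod>e\<in>{e\<in>E. v \<in> e \<and> e \<notin> sub_edges V A E v0 X}. q e v)"

definition new_arrow_vertices :: "'a set \<Rightarrow> 'a set \<Rightarrow> 'a set set \<Rightarrow> ('a set \<Rightarrow> 'a \<Rightarrow> int) \<Rightarrow> 'a \<Rightarrow> 'a set \<Rightarrow> 'a set" where
  "new_arrow_vertices V A E q v0 X = {v\<in>sub_vertices V A E v0 X. bval V A E q v0 X v \<noteq> 1}"

definition TX_V :: "'a set \<Rightarrow> 'a set \<Rightarrow> 'a set set \<Rightarrow> 'a \<Rightarrow> 'a set \<Rightarrow> ('a + 'a) set" where
  "TX_V V A E v0 X = Inl ` sub_vertices V A E v0 X"

definition TX_A :: "'a set \<Rightarrow> 'a set \<Rightarrow> 'a set set \<Rightarrow> ('a set \<Rightarrow> 'a \<Rightarrow> int) \<Rightarrow> 'a \<Rightarrow> 'a set \<Rightarrow> ('a + 'a) set" where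
  "TX_A V A E q v0 X = Inl ` X \<union> Inr ` new_arrow_vertices V A E q v0 X"

definition TX_E :: "'a set \<Rightarrow> 'a set \<Rightarrow> 'a set set \<Rightarrow> ('a set \<Rightarrow> 'a \<Rightarrow> int) \<Rightarrow> 'a \<Rightarrow> 'a set \<Rightarrow> ('a + 'a) set set" where
  "TX_E V A E q v0 X = (image Inl) ` sub_edges V A E v0 X \<union>
     (\<lambda>v. {Inl v, Inr v}) ` new_arrow_vertices V A E q v0 X"

definition TX_f :: "('a \<Rightarrow> int) \<Rightarrow> ('a + 'a) \<Rightarrow> int" where
  "TX_f f x = (case x of Inl c \<Rightarrow> f c | Inr _ \<Rightarrow> 0)"

definition TX_q :: "'a set \<Rightarrow> 'a set \<Rightarrow> 'a set set \<Rightarrow> ('a set \<Rightarrow> 'a \<Rightarrow> int) \<Rightarrow> 'a \<Rightarrow> 'a set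
    \<Rightarrow> ('a + 'a) set \<Rightarrow> ('a + 'a) \<Rightarrow> int" where
  "TX_q V A E q v0 X e x = (case x of
      Inl u \<Rightarrow> (if Inr u \<in> e then bval V A E q v0 X u else q (Inl -` e) u)
    | Inr _ \<Rightarrow> 1)"

end

theory Submission
  imports Defs
begin

text \<open>
  Root the tree at the arrow \<open>\<alpha>\<close> and call the path from \<open>v\<^sub>0\<close> to \<open>\<alpha>\<close> the spine. Since \<open>f = 1\<close>
  on the relevant arrows, \<open>x\<^bsub>c,\<alpha>\<^esub>\<close> is the product of the factors \<open>Q(\<gamma>\<^bsub>c,\<alpha>\<^esub>, u)\<close> over the
  cells \<open>u\<close> of \<open>\<gamma>\<^bsub>c,\<alpha>\<^esub>\<close>; let \<open>R(c)\<close> be the same product without the factor at \<open>c\<close>.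
  Arrows have valency 1 and \<open>Q*(\<gamma>\<^bsub>\<alpha>,\<beta>\<^esub>) = x\<^bsub>\<beta>,\<alpha>\<^esub>\<close>, so \<open>M\<^sub>\<alpha>(T) + I(\<alpha>)\<close> is minus the sum
  of \<open>x\<^bsub>c,\<alpha>\<^esub>(\<delta>\<^sub>c - 2)\<close> over all cells \<open>c \<noteq> \<alpha>\<close>. It remains to see that \<open>M(T\<^sub>\<alpha>)\<close> is the same.

  At a cell \<open>c\<close> off the spine, the pseudo-root condition leaves at most one nontrivial decoration
  on the edges from \<open>c\<close> to its children, and then the identity
  \<open>\<Sum>\<^sub>e \<Prod>\<^bsub>S-{e}\<^esub> g = (|S| - 1) \<Prod>\<^sub>S g + 1\<close> gives
  \<open>x\<^bsub>c,\<alpha>\<^esub>(\<delta>\<^sub>c - 2) = \<Sum>\<^bsub>d child of c\<^esub> R(d) - R(c)\<close>. Summed over all cells off the spine,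
  this leaves only \<open>-R(d)\<close> for the cells \<open>d\<close> hanging directly from the spine, i.e. one term per
  spine vertex \<open>y\<close>. A direct computation in \<open>T\<^sub>\<alpha>\<close> shows that this term is the contribution of
  \<open>y\<close> and of its new arrow (if any) to \<open>-M(T\<^sub>\<alpha>)\<close>.
\<close>

section \<open>Paths in trees\<close>

lemma path_edges_Nil [simp]: "path_edges [] = []"
  by (simp add: path_edges_def)

lemma path_edges_singleton [simp]: "path_edges [x] = []"
  by (simp add: path_edges_def)

lemma path_edges_Cons_Cons [simp]: "path_edges (x # y # xs) = {x, y} # path_edges (y # xs)"
  unfolding path_edges_def by (simp add: upt_conv_Cons map_Suc_upt[symmetric] del: upt_Suc)

lemma path_edges_append:
  "path_edges (xs @ y # ys) = path_edges (xs @ [y]) @ path_edges (y # ys)"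
  by (induction xs rule: induct_list012) auto

lemma path_edges_rev: "path_edges (rev xs) = rev (path_edges xs)"
proof (induction xs rule: induct_list012)
  case (3 x y zs)
  have "path_edges (rev (x # y # zs)) = path_edges (rev zs @ [y]) @ path_edges [y, x]"
    using path_edges_append[of "rev zs" y "[x]"] by simp
  then show ?case using "3.IH"(2) by (simp add: insert_commute)
qed auto

lemma path_edges_map: "path_edges (map g xs) = map (image g) (path_edges xs)"
  by (induction xs rule: induct_list012) auto

lemma inj_on_image_Inl: "inj_on (image Inl) X"
  by (simp add: inj_on_def inj_image_eq_iff)

lemma path_edge_subset: "e \<in> set (path_edges xs) \<Longrightarrow> e \<subseteq> set xs"
  by (induction xs rule: induct_list012) auto

lemma distinct_path_edges: "distinct xs \<Longrightarrow> distinct (path_edges xs)"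
  by (induction xs rule: induct_list012) (auto dest: path_edge_subset)

definition walk :: "'a set \<Rightarrow> 'a set set \<Rightarrow> 'a list \<Rightarrow> bool" where
  "walk C E p \<longleftrightarrow> p \<noteq> [] \<and> set p \<subseteq> C \<and> set (path_edges p) \<subseteq> E"

lemma is_path_iff_walk: "is_path C E p \<longleftrightarrow> walk C E p \<and> distinct (path_edges p)"
  unfolding is_path_def walk_def by auto

lemma walk_append_iff:
  "walk C E (xs @ y # ys) \<longleftrightarrow> walk C E (xs @ [y]) \<and> walk C E (y # ys)"
  unfolding walk_def by (subst path_edges_append) auto

lemma walk_Cons_Cons_iff:
  "walk C E (x # y # xs) \<longleftrightarrow> x \<in> C \<and> {x, y} \<in> E \<and> walk C E (y # xs)"
  unfolding walk_def by auto

lemma is_path_appendD: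
  assumes "is_path C E (xs @ y # ys)"
  shows "is_path C E (xs @ [y])" and "is_path C E (y # ys)"
  using assms walk_append_iff[of C E xs y ys] path_edges_append[of xs y ys]
  unfolding is_path_iff_walk by auto

lemma is_path_rev: "is_path C E p \<Longrightarrow> is_path C E (rev p)"
  unfolding is_path_def by (simp add: path_edges_rev)

locale tree =
  fixes C :: "'a set" and E :: "'a set set"
  assumes is_tree: "is_tree C E"
begin

abbreviation gp :: "'a \<Rightarrow> 'a \<Rightarrow> 'a list" where
  "gp x y \<equiv> gpath C E x y"

lemma finite_cells: "finite C" and finite_edges: "finite E"
  using is_tree unfolding is_tree_def is_graph_def by auto

lemma edge_subset: "e \<in> E \<Longrightarrow> e \<subseteq> C" and card_edge: "e \<in> E \<Longrightarrow> card e = 2"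
  using is_tree unfolding is_tree_def is_graph_def by auto

lemma edge_other_end:
  assumes "e \<in> E" "x \<in> e"
  obtains y where "y \<noteq> x" "e = {x, y}"
proof -
  from card_edge[OF assms(1)] obtain a b where "e = {a, b}" "a \<noteq> b"
    by (auto simp: card_2_iff)
  with assms(2) consider "x = a" "e = {x, b}" "b \<noteq> x" | "x = b" "e = {x, a}" "a \<noteq> x"
    by (auto simp: insert_commute)
  then show thesis using that by cases
qed

lemma gp_is_path:
  assumes "x \<in> C" "y \<in> C"
  shows "is_path C E (gp x y)" "hd (gp x y) = x" "last (gp x y) = y"
proof -
  have "\<exists>!p. is_path C E p \<and> hd p = x \<and> last p = y"
    using is_tree assms unfolding is_tree_def by blast
  then have "is_path C E (gp x y) \<and> hd (gp x y) = x \<and> last (gp x y) = y"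
    unfolding gpath_def by (rule theI')
  then show "is_path C E (gp x y)" "hd (gp x y) = x" "last (gp x y) = y" by auto
qed

lemma gp_unique:
  assumes "is_path C E p" "hd p = x" "last p = y"
  shows "gp x y = p"
proof -
  have "x \<in> C" "y \<in> C"
    using assms unfolding is_path_def by (auto dest: hd_in_set last_in_set)
  then have "\<exists>!p. is_path C E p \<and> hd p = x \<and> last p = y"
    using is_tree unfolding is_tree_def by blast
  then show ?thesis unfolding gpath_def by (rule the1_equality) (use assms in auto)
qed

lemma distinct_if_is_path:
  assumes "is_path C E p"
  shows "distinct p"
proof (rule ccontr)
  assume "\<not> distinct p"
  then obtain xs ys zs y where p: "p = xs @ y # ys @ y # zs"
    using not_distinct_decomp by fastforce
  define p' where "p' = xs @ y # zs"
  have "path_edges p = path_edges (xs @ [y]) @ path_edges (y # ys @ [y]) @ path_edges (y # zs)"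
    unfolding p using path_edges_append[of xs y "ys @ y # zs"] path_edges_append[of "y # ys" y zs]
    by simp
  moreover have "path_edges p' = path_edges (xs @ [y]) @ path_edges (y # zs)"
    unfolding p'_def by (rule path_edges_append)
  ultimately have "is_path C E p'"
    using assms unfolding is_path_def p p'_def by auto
  moreover have "hd p' = hd p" unfolding p'_def p by (cases xs) auto
  moreover have "last p' = last p" unfolding p'_def p by (cases zs) auto
  ultimately have "p' = p" using gp_unique assms by metis
  then show False unfolding p'_def p by simp
qed

lemma is_path_if_walk_distinct: "walk C E p \<Longrightarrow> distinct p \<Longrightarrow> is_path C E p"
  unfolding is_path_iff_walk using distinct_path_edges by blast

text \<open>Shortcutting the repeated cells of a walk leaves a path with the same ends.\<close>
lemma set_gp_subset_walk: "walk C E p \<Longrightarrow> set (gp (hd p) (last p)) \<subseteq> set p"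
proof (induction "length p" arbitrary: p rule: less_induct)
  case less
  show ?case
  proof (cases "distinct p")
    case True
    then show ?thesis using gp_unique[OF is_path_if_walk_distinct[OF less.prems True]] by simp
  next
    case False
    then obtain xs ys zs y where p: "p = xs @ y # ys @ y # zs"
      using not_distinct_decomp by fastforce
    define p' where "p' = xs @ y # zs"
    have "walk C E (xs @ [y])" "walk C E (y # ys @ y # zs)"
      using less.prems walk_append_iff[of C E xs y "ys @ y # zs"] unfolding p by auto
    then have "walk C E p'"
      using walk_append_iff[of C E "y # ys" y zs] walk_append_iff[of C E xs y zs]
      unfolding p'_def by auto
    moreover have "hd p' = hd p" unfolding p'_def p by (cases xs) auto
    moreover have "last p' = last p" unfolding p'_def p by (cases zs) auto
    moreover have "length p' < length p" unfolding p'_def p by simp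
    ultimately have "set (gp (hd p) (last p)) \<subseteq> set p'" using less.hyps by metis
    also have "set p' \<subseteq> set p" unfolding p'_def p by auto
    finally show ?thesis .
  qed
qed

lemma gp_subset: "x \<in> C \<Longrightarrow> y \<in> C \<Longrightarrow> set (gp x y) \<subseteq> C"
  using gp_is_path unfolding is_path_def by blast

lemma distinct_gp: "x \<in> C \<Longrightarrow> y \<in> C \<Longrightarrow> distinct (gp x y)"
  using gp_is_path distinct_if_is_path by blast

lemma gp_Cons_tl: "x \<in> C \<Longrightarrow> y \<in> C \<Longrightarrow> gp x y = x # tl (gp x y)"
  using gp_is_path by (metis is_path_def list.collapse)

lemma start_in_gp: "x \<in> C \<Longrightarrow> y \<in> C \<Longrightarrow> x \<in> set (gp x y)"
  using gp_Cons_tl by (metis list.set_intros(1))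

lemma end_in_gp: "x \<in> C \<Longrightarrow> y \<in> C \<Longrightarrow> y \<in> set (gp x y)"
  using gp_is_path by (metis is_path_def last_in_set)

lemma gp_rev: "x \<in> C \<Longrightarrow> y \<in> C \<Longrightarrow> gp y x = rev (gp x y)"
  using gp_is_path gp_Cons_tl
  by (intro gp_unique) (auto simp: is_path_rev hd_rev last_rev)

lemma gp_split:
  assumes "x \<in> C" "y \<in> C" "gp x y = xs @ u # ys"
  shows "gp u y = u # ys" "gp x u = xs @ [u]"
proof -
  have p: "is_path C E (xs @ [u])" "is_path C E (u # ys)"
    using is_path_appendD gp_is_path(1)[OF assms(1,2)] assms(3) by metis+
  have "last (u # ys) = y" using gp_is_path(3)[OF assms(1,2)] assms(3) by (cases ys) auto
  then show "gp u y = u # ys" using gp_unique p(2) by simp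
  have "hd (xs @ [u]) = x" using gp_is_path(2)[OF assms(1,2)] assms(3) by (cases xs) auto
  then show "gp x u = xs @ [u]" using gp_unique p(1) by simp
qed

lemma gp_edge: "{x, y} \<in> E \<Longrightarrow> x \<noteq> y \<Longrightarrow> gp x y = [x, y]"
  using edge_subset by (intro gp_unique) (auto simp: is_path_def)

lemma gp_Cons_edge:
  assumes "{x, y} \<in> E" "x \<notin> set (gp y z)" "y \<in> C" "z \<in> C"
  shows "gp x z = x # gp y z"
proof (rule gp_unique)
  have "walk C E (x # y # tl (gp y z))"
    using assms edge_subset gp_is_path(1)[OF assms(3,4)] gp_Cons_tl[OF assms(3,4)]
    unfolding walk_Cons_Cons_iff is_path_iff_walk by (metis insert_subset)
  then show "is_path C E (x # gp y z)"
    using assms distinct_gp gp_Cons_tl by (intro is_path_if_walk_distinct) auto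
  show "hd (x # gp y z) = x" by simp
  show "last (x # gp y z) = z"
    using gp_is_path[OF assms(3,4)] unfolding is_path_def by simp
qed

lemma edge_in_path_edges:
  assumes "is_path C E p" "a \<in> set p" "b \<in> set p" "{a, b} \<in> E" "a \<noteq> b"
  shows "{a, b} \<in> set (path_edges p)"
proof -
  have adjacent: "{a, b} \<in> set (path_edges p)"
    if "p = xs @ a # ws @ b # ys" "{a, b} \<in> E" "a \<noteq> b" for xs ws ys a b
  proof -
    have "is_path C E ((a # ws) @ [b])"
      using is_path_appendD[of C E "xs" a "ws @ b # ys"] is_path_appendD[of C E "a # ws" b ys]
        assms(1) that(1) by simp
    then have "gp a b = a # ws @ [b]" using gp_unique by (cases ws) auto
    then have "ws = []" using gp_edge that(2,3) by simp
    then show ?thesis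
      using that(1) path_edges_append[of xs a "b # ys"] by simp
  qed
  obtain xs ys where p: "p = xs @ a # ys" using split_list assms(2) by metis
  then have "b \<in> set xs \<or> b \<in> set ys" using assms(3,5) by auto
  then show ?thesis
  proof
    assume "b \<in> set ys"
    then show ?thesis using adjacent p assms(4,5) by (metis split_list)
  next
    assume "b \<in> set xs"
    then obtain zs ws where "xs = zs @ b # ws" using split_list by metis
    with p have "{b, a} \<in> set (path_edges p)"
      using adjacent[of zs b ws a ys] assms(4,5) by (auto simp: insert_commute)
    then show ?thesis by (simp add: insert_commute)
  qed
qed

lemma edge_meets_path_once:
  assumes "is_path C E p" "e \<in> E" "e \<notin> set (path_edges p)"
    and "a \<in> set p" "b \<in> set p" "a \<in> e" "b \<in> e"
  shows "a = b"
proof (rule ccontr)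
  assume "a \<noteq> b"
  then have "e = {a, b}" using assms(2,6,7) by (metis edge_other_end insertE singletonD)
  then show False using edge_in_path_edges assms \<open>a \<noteq> b\<close> by blast
qed

lemma gp_subset_Un:
  assumes "x \<in> C" "y \<in> C" "z \<in> C"
  shows "set (gp x z) \<subseteq> set (gp x y) \<union> set (gp y z)"
proof -
  obtain xs where xs: "gp x y = xs @ [y]"
    using gp_is_path(1,3)[OF assms(1,2)] unfolding is_path_def by (metis append_butlast_last_id)
  define w where "w = xs @ y # tl (gp y z)"
  have "walk C E w"
    using gp_is_path(1)[OF assms(1,2)] gp_is_path(1)[OF assms(2,3)] gp_Cons_tl[OF assms(2,3)]
      walk_append_iff[of C E xs y "tl (gp y z)"]
    unfolding w_def xs is_path_iff_walk by simp
  moreover have "hd w = x"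
    using gp_is_path(2)[OF assms(1,2)] unfolding w_def xs by (cases xs) auto
  moreover have "last w = z"
    using gp_is_path(3)[OF assms(2,3)] gp_Cons_tl[OF assms(2,3)] unfolding w_def
    by (metis last_appendR list.distinct(1))
  moreover have "set w \<subseteq> set (gp x y) \<union> set (gp y z)"
    using arg_cong[OF gp_Cons_tl[OF assms(2,3)], of set] unfolding w_def xs by auto
  ultimately show ?thesis using set_gp_subset_walk by blast
qed

definition towards :: "'a \<Rightarrow> 'a \<Rightarrow> 'a" where
  "towards x y = hd (tl (gp x y))"

lemma gp_towards:
  assumes "x \<in> C" "y \<in> C" "x \<noteq> y"
  shows "gp x y = x # gp (towards x y) y" "towards x y \<in> C"
    and "{x, towards x y} \<in> E" "towards x y \<noteq> x"
proof -
  obtain p ys where g: "gp x y = x # p # ys"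
    using gp_Cons_tl[OF assms(1,2)] gp_is_path(3)[OF assms(1,2)] assms(3)
    by (metis last_ConsL list.exhaust)
  then have p: "towards x y = p" unfolding towards_def by simp
  show "towards x y \<in> C" "{x, towards x y} \<in> E" "towards x y \<noteq> x"
    using gp_subset[OF assms(1,2)] gp_is_path(1)[OF assms(1,2)] distinct_gp[OF assms(1,2)]
    unfolding g p is_path_def by auto
  then show "gp x y = x # gp (towards x y) y"
    using gp_split(1)[of x y "[x]" p ys] assms(1,2) g p by simp
qed

lemma path_edge_at_start:
  assumes "x \<in> C" "y \<in> C" "x \<noteq> y" "e \<in> set (path_edges (gp x y))" "x \<in> e"
  shows "e = {x, towards x y}"
proof -
  note g = gp_towards[OF assms(1-3)]
  have "path_edges (gp x y) = {x, towards x y} # path_edges (gp (towards x y) y)"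
    using g(1) gp_Cons_tl[OF g(2) assms(2)] by (metis path_edges_Cons_Cons)
  moreover have "x \<notin> set (gp (towards x y) y)"
    using distinct_gp[OF assms(1,2)] g(1) by (metis distinct.simps(2))
  ultimately show ?thesis using assms(4,5) path_edge_subset by fastforce
qed

lemma towards_eq_if_not_in_gp:
  assumes "x \<in> C" "y \<in> C" "c \<in> C" "c \<notin> set (gp x y)"
  shows "towards c x = towards c y"
proof -
  have "c \<noteq> x" "c \<noteq> y" using assms start_in_gp end_in_gp by blast+
  define p where "p = towards c y"
  note gcy = gp_towards[OF assms(3,2) \<open>c \<noteq> y\<close>, folded p_def]
  have "p \<in> set (gp c y)" using gcy(1) gp_Cons_tl[OF gcy(2) assms(2)] by (metis list.set_intros)
  then have "p \<in> set (gp c x) \<or> p \<in> set (gp x y)"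
    using gp_subset_Un[OF assms(3,1,2)] by blast
  then show ?thesis
  proof
    assume "p \<in> set (gp c x)"
    then have "{c, p} \<in> set (path_edges (gp c x))"
      using edge_in_path_edges[OF gp_is_path(1)[OF assms(3,1)] start_in_gp[OF assms(3,1)]]
        gcy(3,4) by auto
    then have "{c, p} = {c, towards c x}"
      using path_edge_at_start[OF assms(3,1) \<open>c \<noteq> x\<close>] by blast
    then show ?thesis using gcy(4) unfolding p_def by (auto simp: doubleton_eq_iff)
  next
    assume "p \<in> set (gp x y)"
    then obtain us vs where "gp x y = us @ p # vs" by (metis split_list)
    then have "set (gp p x) \<subseteq> set (gp x y)"
      using gp_split(2)[OF assms(1,2)] gp_rev[OF assms(1) gcy(2)] by auto
    then have "gp c x = c # gp p x" using gp_Cons_edge gcy(2,3) assms by blast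
    then show ?thesis using gp_Cons_tl[OF gcy(2) assms(1)] unfolding towards_def p_def
      by (metis list.sel(1,3))
  qed
qed

end

section \<open>Rooted trees\<close>

locale rooted_tree = tree +
  fixes r :: 'a
  assumes root_in_cells: "r \<in> C"
begin

abbreviation parent :: "'a \<Rightarrow> 'a" where
  "parent c \<equiv> towards c r"

definition children :: "'a \<Rightarrow> 'a set" where
  "children c = {d \<in> C - {r}. parent d = c}"

lemma finite_children: "finite (children c)"
  using finite_cells unfolding children_def by simp

lemma gp_child:
  assumes "d \<in> children c"
  shows "gp d r = d # gp c r" "{c, d} \<in> E" "d \<in> C"
  using assms gp_towards[of d r] root_in_cells unfolding children_def by (auto simp: insert_commute)

lemma parent_not_child:
  assumes "c \<in> C" "c \<noteq> r" "d \<in> children c"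
  shows "d \<noteq> parent c"
proof
  assume "d = parent c"
  then have "gp c r = c # d # gp c r"
    using gp_towards(1)[OF assms(1) root_in_cells assms(2)] gp_child(1)[OF assms(3)] by simp
  then show False using arg_cong[of _ _ length] by fastforce
qed

lemma neighbour_is_child:
  assumes "c \<in> C" "c \<noteq> r" "{c, d} \<in> E" "d \<noteq> parent c"
  shows "d \<in> children c"
proof -
  have "d \<noteq> c" using card_edge[OF assms(3)] by (cases "d = c") auto
  have "d \<notin> set (gp c r)"
  proof
    assume "d \<in> set (gp c r)"
    then have "{c, d} \<in> set (path_edges (gp c r))"
      using edge_in_path_edges[OF gp_is_path(1) start_in_gp] assms(1,3) root_in_cells \<open>d \<noteq> c\<close>
      by blast
    then have "{c, d} = {c, parent c}"
      using path_edge_at_start[OF assms(1) root_in_cells assms(2)] by blast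
    then show False using assms(4) \<open>d \<noteq> c\<close> by (auto simp: doubleton_eq_iff)
  qed
  then have "gp d r = d # gp c r"
    using gp_Cons_edge[of d c r] assms(1,3) root_in_cells by (simp add: insert_commute)
  moreover have "d \<in> C" using edge_subset[OF assms(3)] by simp
  moreover have "d \<noteq> r" using \<open>d \<notin> set (gp c r)\<close> end_in_gp assms(1) root_in_cells by blast
  moreover have "parent d = c"
    using \<open>gp d r = d # gp c r\<close> gp_Cons_tl[OF assms(1) root_in_cells] unfolding towards_def
    by (metis list.sel(1,3))
  ultimately show ?thesis unfolding children_def by simp
qed

lemma edges_at_non_root:
  assumes "c \<in> C" "c \<noteq> r"
  shows "{e \<in> E. c \<in> e} = insert {c, parent c} ((\<lambda>d. {c, d}) ` children c)"
    and "{c, parent c} \<notin> (\<lambda>d. {c, d}) ` children c"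
    and "inj_on (\<lambda>d. {c, d}) (children c)"
proof -
  show "{c, parent c} \<notin> (\<lambda>d. {c, d}) ` children c"
    using parent_not_child[OF assms] gp_towards(4)[OF assms(1) root_in_cells assms(2)]
    by (auto simp: doubleton_eq_iff)
  show "inj_on (\<lambda>d. {c, d}) (children c)"
    unfolding inj_on_def by (auto simp: doubleton_eq_iff)
  have "e \<in> insert {c, parent c} ((\<lambda>d. {c, d}) ` children c)" if e: "e \<in> E" "c \<in> e" for e
  proof -
    obtain d where "d \<noteq> c" "e = {c, d}" by (rule edge_other_end[OF e])
    then show ?thesis using neighbour_is_child[OF assms] e(1) by (cases "d = parent c") auto
  qed
  then show "{e \<in> E. c \<in> e} = insert {c, parent c} ((\<lambda>d. {c, d}) ` children c)"
    using gp_towards(3)[OF assms(1) root_in_cells assms(2)] gp_child(2) by blast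
qed

lemma valency_non_root:
  assumes "c \<in> C" "c \<noteq> r"
  shows "valency E c = int (card (children c)) + 1"
  using edges_at_non_root[OF assms] finite_children
  by (simp add: valency_def card_insert_if card_image)

lemma sum_children:
  assumes "finite S"
  shows "(\<Sum>c\<in>S. \<Sum>d\<in>children c. F d) = (\<Sum>d\<in>{d \<in> C - {r}. parent d \<in> S}. F d)"
proof -
  have "(\<Sum>c\<in>S. \<Sum>d\<in>{d \<in> {d \<in> C - {r}. parent d \<in> S}. parent d = c}. F d)
      = (\<Sum>d\<in>{d \<in> C - {r}. parent d \<in> S}. F d)"
    by (rule sum.group) (use assms finite_cells in auto)
  moreover have "{d \<in> {d \<in> C - {r}. parent d \<in> S}. parent d = c} = children c" if "c \<in> S" for c
    using that unfolding children_def by auto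
  ultimately show ?thesis by simp
qed

end

section \<open>Products of decorations\<close>

lemma prod_incident_edges_eq_prod_Qcell:
  assumes "finite E"
    and no_chord: "\<And>\<epsilon> a b. \<epsilon> \<in> E \<Longrightarrow> \<epsilon> \<notin> set (path_edges \<gamma>) \<Longrightarrow> a \<in> set \<gamma> \<Longrightarrow> b \<in> set \<gamma> \<Longrightarrow>
      a \<in> \<epsilon> \<Longrightarrow> b \<in> \<epsilon> \<Longrightarrow> a = b"
  shows "(\<Prod>\<epsilon>\<in>incident_edges E \<gamma>. q_path q \<epsilon> \<gamma>) = (\<Prod>u\<in>set \<gamma>. Qcell E q \<gamma> u)"
proof -
  define S where "S u = {\<epsilon>\<in>E. u \<in> \<epsilon> \<and> \<epsilon> \<notin> set (path_edges \<gamma>)}" for u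
  have "incident_edges E \<gamma> = (\<Union>u\<in>set \<gamma>. S u)"
    unfolding incident_edges_def S_def by auto
  then have "(\<Prod>\<epsilon>\<in>incident_edges E \<gamma>. q_path q \<epsilon> \<gamma>) = (\<Prod>u\<in>set \<gamma>. \<Prod>\<epsilon>\<in>S u. q_path q \<epsilon> \<gamma>)"
    using assms unfolding S_def by (auto intro: prod.UNION_disjoint)
  also have "\<dots> = (\<Prod>u\<in>set \<gamma>. Qcell E q \<gamma> u)"
  proof (rule prod.cong[OF refl])
    fix u assume u: "u \<in> set \<gamma>"
    have "(THE u'. u' \<in> set \<gamma> \<and> u' \<in> \<epsilon>) = u" if "\<epsilon> \<in> S u" for \<epsilon>
      using that u no_chord unfolding S_def by (intro the_equality) blast+
    then show "(\<Prod>\<epsilon>\<in>S u. q_path q \<epsilon> \<gamma>) = Qcell E q \<gamma> u"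
      unfolding Qcell_def S_def q_path_def by (intro prod.cong) auto
  qed
  finally show ?thesis .
qed

lemma Qcell_cong:
  assumes "\<And>e. e \<in> E \<Longrightarrow> u \<in> e \<Longrightarrow> e \<in> set (path_edges \<gamma>') \<longleftrightarrow> e \<in> set (path_edges \<gamma>)"
  shows "Qcell E q \<gamma>' u = Qcell E q \<gamma> u"
  unfolding Qcell_def using assms by (intro prod.cong) auto

text \<open>If all factors but \<open>g e\<^sub>0\<close> are \<open>1\<close>, both sides equal \<open>1 + (card S - 1) * g e\<^sub>0\<close>.\<close>
lemma sum_prod_remove_eq:
  fixes g :: "'b \<Rightarrow> int"
  assumes "finite S" "\<And>e e'. e \<in> S \<Longrightarrow> e' \<in> S \<Longrightarrow> g e \<noteq> 1 \<Longrightarrow> g e' \<noteq> 1 \<Longrightarrow> e = e'"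
  shows "(\<Sum>e\<in>S. prod g (S - {e})) = (int (card S) - 1) * prod g S + 1"
proof (cases "\<forall>e\<in>S. g e = 1")
  case True
  then show ?thesis by simp
next
  case False
  then obtain e0 where e0: "e0 \<in> S" "g e0 \<noteq> 1" by auto
  have one: "prod g T = 1" if "T \<subseteq> S - {e0}" for T
    using assms(2) e0 that by (intro prod.neutral) blast
  have prod_S: "prod g S = g e0"
    using prod.remove[OF assms(1) e0(1), of g] one[of "S - {e0}"] by simp
  have "(\<Sum>e\<in>S. prod g (S - {e})) = prod g (S - {e0}) + (\<Sum>e\<in>S - {e0}. prod g (S - {e}))"
    using sum.remove[OF assms(1) e0(1)] .
  also have "(\<Sum>e\<in>S - {e0}. prod g (S - {e})) = (\<Sum>e\<in>S - {e0}. g e0)"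
  proof (rule sum.cong[OF refl])
    fix e assume e: "e \<in> S - {e0}"
    have "prod g (S - {e}) = g e0 * prod g (S - {e} - {e0})"
      using e e0(1) assms(1) by (intro prod.remove) auto
    then show "prod g (S - {e}) = g e0" using one[of "S - {e} - {e0}"] by auto
  qed
  also have "(\<Sum>e\<in>S - {e0}. g e0) = (int (card S) - 1) * g e0"
  proof -
    have "card S > 0" using e0(1) assms(1) card_gt_0_iff by blast
    then show ?thesis using e0(1) assms(1) by (simp add: card_Diff_singleton of_nat_diff)
  qed
  finally show ?thesis using prod_S one[of "S - {e0}"] by simp
qed

section \<open>Decorated trees rooted at an arrow\<close>

locale arrow_rooted_tree =
  fixes V A :: "'a set" and E :: "'a set set" and f :: "'a \<Rightarrow> int"
    and q :: "'a set \<Rightarrow> 'a \<Rightarrow> int" and v0 r :: 'a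
  assumes decorated: "decorated_pseudo_rooted_tree V A E f q v0"
    and root_arrow: "r \<in> A"

context arrow_rooted_tree
begin

lemma finite_V: "finite V" and finite_A: "finite A" and disjoint_V_A: "V \<inter> A = {}"
  and is_tree_V_A: "is_tree (V \<union> A) E"
  and valency_arrow: "a \<in> A \<Longrightarrow> valency E a = 1"
  and q_arrow: "e \<in> E \<Longrightarrow> a \<in> A \<Longrightarrow> a \<in> e \<Longrightarrow> q e a = 1"
  and v0_vertex: "v0 \<in> V" and q_v0: "e \<in> E \<Longrightarrow> v0 \<in> e \<Longrightarrow> q e v0 = 1"
  and pseudo_root_card: "v \<in> V - {v0} \<Longrightarrow>
    card {e \<in> E. v \<in> e \<and> e \<notin> set (path_edges (gpath (V \<union> A) E v0 v)) \<and> q e v \<noteq> 1} \<le> 1"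
  using decorated unfolding decorated_pseudo_rooted_tree_def decorated_tree_def pseudo_root_def
  by simp_all

end

sublocale arrow_rooted_tree \<subseteq> rooted_tree "V \<union> A" E r
  using is_tree_V_A root_arrow by unfold_locales blast+

context arrow_rooted_tree
begin

lemma v0_in_cells: "v0 \<in> V \<union> A"
  using v0_vertex by simp

lemma v0_ne_root: "v0 \<noteq> r"
  using v0_vertex root_arrow disjoint_V_A by auto

definition spine :: "'a list" where
  "spine = gp v0 r"

definition spine_vertices :: "'a set" where
  "spine_vertices = set spine - {r}"

text \<open>For \<open>f r = 1\<close>, \<open>path_weight c\<close> is \<open>x\<^bsub>c,r\<^esub>\<close> (see \<open>xval_eq_path_weight\<close>) and \<open>excess c\<close> is the
  summand of \<open>c\<close> in \<open>-M\<^sub>r\<close>.\<close>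

definition path_weight :: "'a \<Rightarrow> int" where
  "path_weight c = (\<Prod>u\<in>set (gp c r). Qcell E q (gp c r) u)"

definition tail_weight :: "'a \<Rightarrow> int" where
  "tail_weight c = (\<Prod>u\<in>set (tl (gp c r)). Qcell E q (gp c r) u)"

definition excess :: "'a \<Rightarrow> int" where
  "excess c = path_weight c * (valency E c - 2)"

lemma spine_is_path: "is_path (V \<union> A) E spine"
  unfolding spine_def using gp_is_path v0_in_cells root_in_cells by blast

lemma spine_subset: "set spine \<subseteq> V \<union> A"
  unfolding spine_def using gp_subset v0_in_cells root_in_cells by blast

lemma root_in_spine: "r \<in> set spine"
  unfolding spine_def using end_in_gp v0_in_cells root_in_cells by blast

lemma v0_in_spine: "v0 \<in> set spine"
  unfolding spine_def using start_in_gp v0_in_cells root_in_cells by blast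

lemma spine_suffix:
  assumes "y \<in> set spine"
  obtains xs where "spine = xs @ gp y r" "gp v0 y = xs @ [y]"
proof -
  obtain xs ys where s: "spine = xs @ y # ys" using assms by (metis split_list)
  then have "gp y r = y # ys" "gp v0 y = xs @ [y]"
    using gp_split[OF v0_in_cells root_in_cells] unfolding spine_def by blast+
  then show thesis using that s by simp
qed

lemma gp_spine_subset:
  assumes "y \<in> set spine"
  shows "set (gp y r) \<subseteq> set spine" "set (path_edges (gp y r)) \<subseteq> set (path_edges spine)"
proof -
  obtain xs where xs: "spine = xs @ gp y r" by (rule spine_suffix[OF assms])
  then show "set (gp y r) \<subseteq> set spine" by auto
  have "gp y r = y # tl (gp y r)" using gp_Cons_tl assms spine_subset root_in_cells by blast
  then show "set (path_edges (gp y r)) \<subseteq> set (path_edges spine)"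
    using xs path_edges_append[of xs y "tl (gp y r)"] by (metis Un_upper2 set_append)
qed

lemma parent_in_spine:
  assumes "y \<in> set spine" "y \<noteq> r"
  shows "parent y \<in> set spine"
proof -
  have y: "y \<in> V \<union> A" using assms(1) spine_subset by blast
  note g = gp_towards[OF y root_in_cells assms(2)]
  have "parent y \<in> set (gp y r)"
    using g(1) start_in_gp[OF g(2) root_in_cells] by simp
  then show ?thesis using gp_spine_subset(1)[OF assms(1)] by blast
qed

lemma path_weight_eq:
  assumes "c \<in> V \<union> A"
  shows "path_weight c = Qcell E q (gp c r) c * tail_weight c"
proof -
  have g: "gp c r = c # tl (gp c r)" using gp_Cons_tl assms root_in_cells by blast
  have "c \<notin> set (tl (gp c r))" using distinct_gp[OF assms root_in_cells] g
    by (metis distinct.simps(2))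
  then show ?thesis unfolding path_weight_def tail_weight_def
    by (subst g, simp only: list.set(2), subst prod.insert) auto
qed

lemma tail_weight_child:
  assumes "d \<in> children c"
  shows "tail_weight d = Qcell E q (d # gp c r) c * tail_weight c"
proof -
  have c: "c \<in> V \<union> A" and gd: "gp d r = d # gp c r"
    using gp_child[OF assms] edge_subset by auto
  have g: "gp c r = c # tl (gp c r)" using gp_Cons_tl c root_in_cells by blast
  have "distinct (d # gp c r)"
    using distinct_gp[OF gp_child(3)[OF assms] root_in_cells] unfolding gd .
  then have dist: "distinct (d # c # tl (gp c r))" by (subst (asm) g)
  have "tail_weight d = (\<Prod>u\<in>set (gp c r). Qcell E q (d # gp c r) u)"
    unfolding tail_weight_def gd by simp
  also have "\<dots> = Qcell E q (d # gp c r) c * (\<Prod>u\<in>set (tl (gp c r)). Qcell E q (d # gp c r) u)"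
    using dist by (subst g, simp only: list.set(2), subst prod.insert) auto
  also have "(\<Prod>u\<in>set (tl (gp c r)). Qcell E q (d # gp c r) u) = tail_weight c"
    unfolding tail_weight_def
  proof (rule prod.cong[OF refl], rule Qcell_cong)
    fix u e assume "u \<in> set (tl (gp c r))" "e \<in> E" "u \<in> e"
    moreover have "path_edges (d # gp c r) = {d, c} # path_edges (gp c r)"
      using g by (metis path_edges_Cons_Cons)
    ultimately show "e \<in> set (path_edges (d # gp c r)) \<longleftrightarrow> e \<in> set (path_edges (gp c r))"
      using dist by auto
  qed
  finally show ?thesis .
qed

lemma edges_off_gp_root:
  assumes "c \<in> V \<union> A" "c \<noteq> r"
  shows "{e \<in> E. c \<in> e \<and> e \<notin> set (path_edges (gp c r))} = (\<lambda>d. {c, d}) ` children c"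
proof (intro equalityI subsetI)
  note g = gp_towards[OF assms(1) root_in_cells assms(2)]
  note at_c = edges_at_non_root(1,2)[OF assms]
  have "path_edges (gp c r) = {c, parent c} # path_edges (gp (parent c) r)"
    using g(1) gp_Cons_tl[OF g(2) root_in_cells] by (metis path_edges_Cons_Cons)
  then have parent_edge: "{c, parent c} \<in> set (path_edges (gp c r))" by simp
  fix e
  show "e \<in> (\<lambda>d. {c, d}) ` children c"
    if e: "e \<in> {e \<in> E. c \<in> e \<and> e \<notin> set (path_edges (gp c r))}"
  proof -
    have "e \<in> {e \<in> E. c \<in> e}" using e by simp
    then have "e \<in> insert {c, parent c} ((\<lambda>d. {c, d}) ` children c)" unfolding at_c(1) .
    then show ?thesis using e parent_edge by auto
  qed
  show "e \<in> {e \<in> E. c \<in> e \<and> e \<notin> set (path_edges (gp c r))}"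
    if e: "e \<in> (\<lambda>d. {c, d}) ` children c"
  proof -
    have "e \<in> insert {c, parent c} ((\<lambda>d. {c, d}) ` children c)" using e by simp
    then have "e \<in> {e \<in> E. c \<in> e}" unfolding at_c(1) .
    moreover have "e \<noteq> {c, parent c}" using e at_c(2) by auto
    ultimately show ?thesis
      using path_edge_at_start[OF assms(1) root_in_cells assms(2), of e] by auto
  qed
qed

lemma Qcell_gp_root:
  assumes "c \<in> V \<union> A" "c \<noteq> r"
  shows "Qcell E q (gp c r) c = (\<Prod>e\<in>(\<lambda>d. {c, d}) ` children c. q e c)"
  unfolding Qcell_def edges_off_gp_root[OF assms] ..

lemma Qcell_child_path:
  assumes "c \<in> V \<union> A" "c \<noteq> r" "d \<in> children c"
  shows "Qcell E q (d # gp c r) c = (\<Prod>e\<in>(\<lambda>d. {c, d}) ` children c - {{c, d}}. q e c)"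
proof -
  have "path_edges (d # gp c r) = {d, c} # path_edges (gp c r)"
    using gp_Cons_tl[OF assms(1) root_in_cells] by (metis path_edges_Cons_Cons)
  then have "{e \<in> E. c \<in> e \<and> e \<notin> set (path_edges (d # gp c r))}
      = {e \<in> E. c \<in> e \<and> e \<notin> set (path_edges (gp c r))} - {{c, d}}"
    by (auto simp: insert_commute)
  then show ?thesis unfolding Qcell_def edges_off_gp_root[OF assms(1,2)] by simp
qed

text \<open>Off the spine, the edge towards \<open>v\<^sub>0\<close> is the edge towards the root, so the pseudo-root
  condition controls the edges to the children.\<close>
lemma child_edges_at_most_one_nontrivial:
  assumes "c \<in> V \<union> A" "c \<notin> set spine"
    and "e \<in> (\<lambda>d. {c, d}) ` children c" "e' \<in> (\<lambda>d. {c, d}) ` children c"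
    and "q e c \<noteq> 1" "q e' c \<noteq> 1"
  shows "e = e'"
proof (cases "c \<in> A")
  case True
  have "c \<noteq> r" using assms(2) root_in_spine by auto
  then have "card (children c) = 0"
    using valency_non_root[OF assms(1)] valency_arrow[OF True] by simp
  then have "children c = {}" using finite_children by simp
  then show ?thesis using assms(3) by simp
next
  case False
  have "c \<noteq> r" "c \<noteq> v0" using assms(2) root_in_spine v0_in_spine by auto
  then have cV: "c \<in> V - {v0}" using assms(1) False by simp
  have towards_v0: "towards c v0 = parent c"
    using towards_eq_if_not_in_gp[OF v0_in_cells root_in_cells assms(1)] assms(2)
    unfolding spine_def by simp
  have off_gp_v0: "x \<notin> set (path_edges (gp v0 c))" if x: "x \<in> (\<lambda>d. {c, d}) ` children c" for x
  proof
    assume "x \<in> set (path_edges (gp v0 c))"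
    then have "x \<in> set (path_edges (gp c v0))"
      using gp_rev[OF assms(1) v0_in_cells] by (simp add: path_edges_rev)
    moreover have "c \<in> x" using x by auto
    ultimately have "x = {c, parent c}"
      using path_edge_at_start[OF assms(1) v0_in_cells \<open>c \<noteq> v0\<close>] towards_v0 by simp
    then show False using x edges_at_non_root(2)[OF assms(1) \<open>c \<noteq> r\<close>] by simp
  qed
  define T where "T = {e \<in> E. c \<in> e \<and> e \<notin> set (path_edges (gp v0 c)) \<and> q e c \<noteq> 1}"
  have "x \<in> T" if "x \<in> (\<lambda>d. {c, d}) ` children c" "q x c \<noteq> 1" for x
    using that off_gp_v0 gp_child(2) unfolding T_def by auto
  then have "e \<in> T" "e' \<in> T" using assms(3-6) by blast+
  moreover have "card T \<le> Suc 0" using pseudo_root_card[OF cV] unfolding T_def by simp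
  moreover have "finite T" using finite_edges unfolding T_def by simp
  ultimately show ?thesis using card_le_Suc0_iff_eq by blast
qed

lemma excess_off_spine:
  assumes "c \<in> V \<union> A" "c \<notin> set spine"
  shows "excess c = (\<Sum>d\<in>children c. tail_weight d) - tail_weight c"
proof -
  have "c \<noteq> r" using assms(2) root_in_spine by auto
  define S where "S = (\<lambda>d. {c, d}) ` children c"
  define g where "g e = q e c" for e
  have inj: "inj_on (\<lambda>d. {c, d}) (children c)"
    using edges_at_non_root(3)[OF assms(1) \<open>c \<noteq> r\<close>] .
  have "(\<Sum>d\<in>children c. tail_weight d) = (\<Sum>d\<in>children c. prod g (S - {{c, d}}) * tail_weight c)"
    using tail_weight_child Qcell_child_path[OF assms(1) \<open>c \<noteq> r\<close>]
    unfolding S_def g_def by (intro sum.cong) auto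
  also have "\<dots> = (\<Sum>e\<in>S. prod g (S - {e})) * tail_weight c"
    unfolding S_def sum.reindex[OF inj] by (simp add: sum_distrib_right)
  also have "(\<Sum>e\<in>S. prod g (S - {e})) = (int (card S) - 1) * prod g S + 1"
    by (rule sum_prod_remove_eq)
      (use child_edges_at_most_one_nontrivial[OF assms] finite_children in \<open>auto simp: S_def g_def\<close>)
  finally show ?thesis
    using path_weight_eq[OF assms(1)] Qcell_gp_root[OF assms(1) \<open>c \<noteq> r\<close>]
      valency_non_root[OF assms(1) \<open>c \<noteq> r\<close>] card_image[OF inj]
    unfolding excess_def S_def g_def by (simp add: algebra_simps)
qed

text \<open>Summing the local identities, the tail weights of all cells off the spine cancel except
  those hanging directly from the spine.\<close>
lemma sum_excess_off_spine:
  "(\<Sum>c\<in>(V \<union> A) - set spine. excess c)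
     = - (\<Sum>d\<in>{d \<in> (V \<union> A) - set spine. parent d \<in> set spine}. tail_weight d)"
proof -
  let ?off = "(V \<union> A) - set spine"
  let ?inner = "{d \<in> ?off. parent d \<notin> set spine}"
  let ?hanging = "{d \<in> ?off. parent d \<in> set spine}"
  have "{d \<in> (V \<union> A) - {r}. parent d \<in> ?off} = ?inner"
    using parent_in_spine root_in_spine gp_towards(2)[OF _ root_in_cells] by blast
  then have "(\<Sum>c\<in>?off. \<Sum>d\<in>children c. tail_weight d) = (\<Sum>d\<in>?inner. tail_weight d)"
    using sum_children[of ?off tail_weight] finite_cells by simp
  moreover have "(\<Sum>c\<in>?off. tail_weight c)
      = (\<Sum>d\<in>?inner. tail_weight d) + (\<Sum>d\<in>?hanging. tail_weight d)"
  proof -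
    have "(\<Sum>d\<in>?inner \<union> ?hanging. tail_weight d)
        = (\<Sum>d\<in>?inner. tail_weight d) + (\<Sum>d\<in>?hanging. tail_weight d)"
      by (rule sum.union_disjoint) (use finite_cells in auto)
    moreover have "?inner \<union> ?hanging = ?off" by blast
    ultimately show ?thesis by simp
  qed
  moreover have "(\<Sum>c\<in>?off. excess c)
      = (\<Sum>c\<in>?off. \<Sum>d\<in>children c. tail_weight d) - (\<Sum>c\<in>?off. tail_weight c)"
    using excess_off_spine by (simp add: sum_subtractf)
  ultimately show ?thesis by simp
qed

definition off_edges :: "'a \<Rightarrow> 'a set set" where
  "off_edges y = {e \<in> E. y \<in> e \<and> e \<notin> set (path_edges spine)}"

definition b_spine :: "'a \<Rightarrow> int" where
  "b_spine y = (\<Prod>e\<in>off_edges y. q e y)"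

definition spine_edges_at :: "'a \<Rightarrow> 'a set set" where
  "spine_edges_at y = {e \<in> set (path_edges spine). y \<in> e}"

definition spine_Q :: "'a \<Rightarrow> 'a \<Rightarrow> int" where
  "spine_Q y u = (\<Prod>e\<in>{e \<in> set (path_edges spine). u \<in> e \<and> e \<notin> set (path_edges (gp y r))}. q e u)"

definition hanging :: "'a \<Rightarrow> 'a set" where
  "hanging y = {c \<in> (V \<union> A) - set spine. parent c = y}"

definition spine_term :: "'a \<Rightarrow> int" where
  "spine_term y = excess y - (\<Sum>c\<in>hanging y. tail_weight c)"

lemma finite_off_edges: "finite (off_edges y)"
  using finite_edges unfolding off_edges_def by simp

lemma spine_edges_subset: "set (path_edges spine) \<subseteq> E"
  using spine_is_path unfolding is_path_def by blast

lemma Qcell_gp_spine: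
  assumes "y \<in> set spine"
  shows "Qcell E q (gp y r) u = spine_Q y u * b_spine u"
proof -
  let ?P = "{e \<in> set (path_edges spine). u \<in> e \<and> e \<notin> set (path_edges (gp y r))}"
  have "{e \<in> E. u \<in> e \<and> e \<notin> set (path_edges (gp y r))} = ?P \<union> off_edges u"
    unfolding off_edges_def using spine_edges_subset gp_spine_subset(2)[OF assms] by auto
  moreover have "?P \<inter> off_edges u = {}" unfolding off_edges_def by auto
  ultimately show ?thesis
    unfolding Qcell_def spine_Q_def b_spine_def using finite_off_edges
    by (simp add: prod.union_disjoint)
qed

lemma hanging_not_in_spine: "c \<in> hanging y \<Longrightarrow> c \<notin> set spine \<and> c \<in> V \<union> A"
  unfolding hanging_def by auto

lemma off_edges_eq_hanging:
  assumes "y \<in> set spine"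
  shows "off_edges y = (\<lambda>c. {y, c}) ` hanging y" "inj_on (\<lambda>c. {y, c}) (hanging y)"
proof -
  have y: "y \<in> V \<union> A" using assms spine_subset by blast
  show "inj_on (\<lambda>c. {y, c}) (hanging y)" unfolding inj_on_def by (auto simp: doubleton_eq_iff)
  show "off_edges y = (\<lambda>c. {y, c}) ` hanging y"
  proof (intro equalityI subsetI)
    fix e assume e: "e \<in> off_edges y"
    then obtain c where c: "c \<noteq> y" "e = {y, c}"
      unfolding off_edges_def by (metis (no_types, lifting) edge_other_end mem_Collect_eq)
    have "e \<in> E" using e unfolding off_edges_def by simp
    then have cC: "c \<in> V \<union> A" using edge_subset c by blast
    have "c \<notin> set spine"
    proof
      assume "c \<in> set spine"
      then have "e \<in> set (path_edges spine)"
        using edge_in_path_edges[OF spine_is_path assms] \<open>e \<in> E\<close> c by metis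
      then show False using e unfolding off_edges_def by simp
    qed
    then have "c \<notin> set (gp y r)" using gp_spine_subset(1)[OF assms] by blast
    then have "gp c r = c # gp y r"
      using gp_Cons_edge[of c y r] \<open>e \<in> E\<close> c y root_in_cells by (simp add: insert_commute)
    then have "parent c = y"
      using gp_Cons_tl[OF y root_in_cells] unfolding towards_def by (metis list.sel(1,3))
    then show "e \<in> (\<lambda>c. {y, c}) ` hanging y"
      using c cC \<open>c \<notin> set spine\<close> unfolding hanging_def by blast
  next
    fix e assume "e \<in> (\<lambda>c. {y, c}) ` hanging y"
    then obtain c where c: "c \<in> hanging y" "e = {y, c}" by blast
    then have "c \<noteq> r" using hanging_not_in_spine root_in_spine by blast
    then have "{y, c} \<in> E"
      using c gp_towards(3)[of c r] root_in_cells unfolding hanging_def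
        by (auto simp: insert_commute)
    moreover have "e \<notin> set (path_edges spine)"
      using c hanging_not_in_spine path_edge_subset by blast
    ultimately show "e \<in> off_edges y" unfolding off_edges_def c(2) by simp
  qed
qed

lemma Qcell_hanging:
  assumes "y \<in> set spine" "c \<in> hanging y"
  shows "Qcell E q (c # gp y r) y = spine_Q y y * (\<Prod>e\<in>off_edges y - {{y, c}}. q e y)"
proof -
  let ?P = "{e \<in> set (path_edges spine). y \<in> e \<and> e \<notin> set (path_edges (gp y r))}"
  have y: "y \<in> V \<union> A" using assms(1) spine_subset by blast
  have pe: "path_edges (c # gp y r) = {y, c} # path_edges (gp y r)"
    using gp_Cons_tl[OF y root_in_cells] by (metis insert_commute path_edges_Cons_Cons)
  have "{y, c} \<notin> set (path_edges spine)"
    using hanging_not_in_spine[OF assms(2)] path_edge_subset by blast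
  then have "{e \<in> E. y \<in> e \<and> e \<notin> set (path_edges (c # gp y r))} = ?P \<union> (off_edges y - {{y, c}})"
    unfolding pe off_edges_def using spine_edges_subset gp_spine_subset(2)[OF assms(1)] by auto
  moreover have "?P \<inter> (off_edges y - {{y, c}}) = {}" unfolding off_edges_def by auto
  ultimately show ?thesis
    unfolding Qcell_def spine_Q_def using finite_off_edges by (simp add: prod.union_disjoint)
qed

lemma valency_spine:
  "valency E y = int (card (spine_edges_at y)) + int (card (off_edges y))"
proof -
  have "{e \<in> E. y \<in> e} = spine_edges_at y \<union> off_edges y"
    unfolding spine_edges_at_def off_edges_def using spine_edges_subset by auto
  moreover have "spine_edges_at y \<inter> off_edges y = {}"
    unfolding spine_edges_at_def off_edges_def by auto
  ultimately show ?thesis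
    unfolding valency_def using finite_off_edges by (simp add: card_Un_disjoint spine_edges_at_def)
qed

text \<open>An interior spine cell is the parent of its predecessor on the spine, so it is no leaf.\<close>
lemma spine_vertex_in_V:
  assumes "y \<in> set spine" "y \<noteq> r"
  shows "y \<in> V"
proof (rule ccontr)
  assume "y \<notin> V"
  then have "y \<in> A" "y \<noteq> v0" using assms(1) spine_subset v0_vertex by auto
  obtain xs where xs: "spine = xs @ gp y r" "gp v0 y = xs @ [y]" by (rule spine_suffix[OF assms(1)])
  have "xs \<noteq> []"
    using xs(2) gp_is_path(2)[OF v0_in_cells, of y] assms(1) spine_subset \<open>y \<noteq> v0\<close> by auto
  then obtain ps p where p: "xs = ps @ [p]" by (metis rev_exhaust)
  have y: "y \<in> V \<union> A" using \<open>y \<in> A\<close> by simp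
  have "gp v0 r = ps @ p # gp y r" using xs(1) p unfolding spine_def by simp
  then have gpp: "gp p r = p # gp y r" by (rule gp_split(1)[OF v0_in_cells root_in_cells])
  have "p \<in> V \<union> A" using spine_subset xs(1) p by auto
  moreover have "p \<noteq> r"
    using distinct_gp[OF \<open>p \<in> V \<union> A\<close> root_in_cells] end_in_gp[OF y root_in_cells] gpp by auto
  moreover have "parent p = y"
    using gpp gp_Cons_tl[OF y root_in_cells] unfolding towards_def by (metis list.sel(1,3))
  ultimately have "p \<in> children y" unfolding children_def by simp
  moreover have "children y = {}"
    using valency_non_root[OF y assms(2)] valency_arrow[OF \<open>y \<in> A\<close>] finite_children by simp
  ultimately show False by simp
qed

lemma off_edges_at_most_one_nontrivial:
  assumes "y \<in> set spine" "y \<noteq> r" "e \<in> off_edges y" "e' \<in> off_edges y"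
    and "q e y \<noteq> 1" "q e' y \<noteq> 1"
  shows "e = e'"
proof (cases "y = v0")
  case True
  then show ?thesis using assms(3,5) q_v0 unfolding off_edges_def by auto
next
  case False
  then have yV: "y \<in> V - {v0}" using spine_vertex_in_V[OF assms(1,2)] by simp
  obtain xs where xs: "spine = xs @ gp y r" "gp v0 y = xs @ [y]" by (rule spine_suffix[OF assms(1)])
  have "set (path_edges (gp v0 y)) \<subseteq> set (path_edges spine)"
    using xs path_edges_append[of xs y "tl (gp y r)"] gp_Cons_tl[OF _ root_in_cells, of y]
      spine_subset assms(1) by (metis Un_upper1 set_append subsetD)
  then have "off_edges y \<subseteq> {e \<in> E. y \<in> e \<and> e \<notin> set (path_edges (gp v0 y))}"
    unfolding off_edges_def by blast
  define T where "T = {e \<in> E. y \<in> e \<and> e \<notin> set (path_edges (gp v0 y)) \<and> q e y \<noteq> 1}"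
  have "e \<in> T" "e' \<in> T"
    using assms(3-6) \<open>off_edges y \<subseteq> _\<close> unfolding T_def by blast+
  moreover have "card T \<le> Suc 0" using pseudo_root_card[OF yV] unfolding T_def by simp
  moreover have "finite T" using finite_edges unfolding T_def by simp
  ultimately show ?thesis using card_le_Suc0_iff_eq by blast
qed

lemma spine_term_eq:
  assumes "y \<in> set spine" "y \<noteq> r"
  shows "spine_term y
    = spine_Q y y * tail_weight y * (b_spine y * (int (card (spine_edges_at y)) - 1) - 1)"
proof -
  let ?S = "off_edges y"
  let ?g = "\<lambda>e. q e y"
  have y: "y \<in> V \<union> A" using assms(1) spine_subset by blast
  have path_weight_y: "path_weight y = spine_Q y y * b_spine y * tail_weight y"
    using path_weight_eq[OF y] Qcell_gp_spine[OF assms(1)] by simp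
  have hanging_child: "c \<in> children y" if "c \<in> hanging y" for c
    using that root_in_spine unfolding hanging_def children_def by auto
  have "(\<Sum>c\<in>hanging y. tail_weight c)
      = (\<Sum>c\<in>hanging y. spine_Q y y * prod ?g (?S - {{y, c}}) * tail_weight y)"
    using tail_weight_child[OF hanging_child] Qcell_hanging[OF assms(1)] by (intro sum.cong) auto
  also have "\<dots> = spine_Q y y * tail_weight y * (\<Sum>e\<in>?S. prod ?g (?S - {e}))"
    unfolding off_edges_eq_hanging(1)[OF assms(1)]
      sum.reindex[OF off_edges_eq_hanging(2)[OF assms(1)]]
    by (simp add: sum_distrib_left algebra_simps)
  also have "(\<Sum>e\<in>?S. prod ?g (?S - {e})) = (int (card ?S) - 1) * b_spine y + 1"
    unfolding b_spine_def
    by (rule sum_prod_remove_eq[OF finite_off_edges off_edges_at_most_one_nontrivial[OF assms]])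
  finally show ?thesis
    unfolding spine_term_def excess_def path_weight_y valency_spine by (simp add: algebra_simps)
qed

lemma off_edges_root: "off_edges r = {}"
proof -
  have "r \<noteq> v0" using v0_ne_root by simp
  note g = gp_towards[OF root_in_cells v0_in_cells this]
  have "path_edges (gp r v0) = {r, towards r v0} # path_edges (gp (towards r v0) v0)"
    using g(1) gp_Cons_tl[OF g(2) v0_in_cells] by (metis path_edges_Cons_Cons)
  moreover have "set (path_edges (gp r v0)) = set (path_edges spine)"
    unfolding spine_def gp_rev[OF v0_in_cells root_in_cells] path_edges_rev by simp
  ultimately have spine_edge: "{r, towards r v0} \<in> set (path_edges spine)"
    by (metis list.set_intros(1))
  have "card {e \<in> E. r \<in> e} = 1" using valency_arrow[OF root_arrow] unfolding valency_def by simp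
  then obtain e0 where e0: "{e \<in> E. r \<in> e} = {e0}" by (rule card_1_singletonE)
  moreover have "{r, towards r v0} \<in> {e \<in> E. r \<in> e}" using g(3) by simp
  ultimately have "{e \<in> E. r \<in> e} = {{r, towards r v0}}" by simp
  then have "e = {r, towards r v0}" if "e \<in> E" "r \<in> e" for e
    using that by (metis (mono_tags, lifting) mem_Collect_eq singletonD)
  then show ?thesis using spine_edge unfolding off_edges_def by blast
qed

lemma hanging_root: "hanging r = {}"
  using off_edges_eq_hanging(1)[OF root_in_spine] off_edges_root by simp

lemma sum_excess_eq_sum_spine_term:
  "(\<Sum>c\<in>(V \<union> A) - {r}. excess c) = (\<Sum>y\<in>spine_vertices. spine_term y)"
proof -
  let ?off = "(V \<union> A) - set spine"
  define H where "H = {d \<in> ?off. parent d \<in> set spine}"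
  have "(\<Sum>y\<in>set spine. \<Sum>c\<in>{x \<in> H. parent x = y}. tail_weight c) = (\<Sum>d\<in>H. tail_weight d)"
    by (rule sum.group) (use finite_cells in \<open>auto simp: H_def\<close>)
  moreover have "{x \<in> H. parent x = y} = hanging y" if "y \<in> set spine" for y
    using that unfolding H_def hanging_def by auto
  ultimately have "(\<Sum>d\<in>H. tail_weight d) = (\<Sum>y\<in>set spine. \<Sum>c\<in>hanging y. tail_weight c)"
    by simp
  also have "\<dots> = (\<Sum>y\<in>set spine - {r}. \<Sum>c\<in>hanging y. tail_weight c)"
    using sum.remove[OF _ root_in_spine, of "\<lambda>y. \<Sum>c\<in>hanging y. tail_weight c"] hanging_root
    by simp
  finally have off: "(\<Sum>c\<in>?off. excess c) = - (\<Sum>y\<in>set spine - {r}. \<Sum>c\<in>hanging y. tail_weight c)"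
    using sum_excess_off_spine unfolding H_def by simp
  have "(V \<union> A) - {r} = (set spine - {r}) \<union> ?off" using spine_subset root_in_spine by auto
  moreover have "sum excess ((set spine - {r}) \<union> ?off)
      = sum excess (set spine - {r}) + sum excess ?off"
    by (rule sum.union_disjoint) (use finite_cells in auto)
  ultimately have "(\<Sum>c\<in>(V \<union> A) - {r}. excess c)
      = (\<Sum>y\<in>set spine - {r}. excess y) + (\<Sum>c\<in>?off. excess c)"
    by simp
  then show ?thesis unfolding off spine_term_def spine_vertices_def by (simp add: sum_subtractf)
qed

definition new_arrows :: "'a set" where
  "new_arrows = {y \<in> spine_vertices. b_spine y \<noteq> 1}"

section \<open>The subtree spanned by the spine\<close>

text \<open>A concrete description of \<open>T\<^sub>r\<close>: the spine, with a pendant arrow \<open>Inr y\<close> at each spine vertex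
  \<open>y\<close> whose off-spine decorations multiply to \<open>b_spine y \<noteq> 1\<close>.\<close>

definition T_cells :: "('a + 'a) set" where
  "T_cells = Inl ` set spine \<union> Inr ` new_arrows"

definition T_edges :: "('a + 'a) set set" where
  "T_edges = image Inl ` set (path_edges spine) \<union> (\<lambda>v. {Inl v, Inr v}) ` new_arrows"

abbreviation T_q :: "('a + 'a) set \<Rightarrow> 'a + 'a \<Rightarrow> int" where
  "T_q \<equiv> TX_q V A E q v0 {r}"

lemma sub_vertices_root: "sub_vertices V A E v0 {r} = spine_vertices"
  using spine_vertex_in_V root_arrow disjoint_V_A
  unfolding sub_vertices_def spine_vertices_def spine_def by auto

lemma sub_edges_root: "sub_edges V A E v0 {r} = set (path_edges spine)"
  using spine_edges_subset unfolding sub_edges_def spine_def by auto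

lemma bval_root: "bval V A E q v0 {r} = b_spine"
  unfolding bval_def[abs_def] sub_edges_root b_spine_def off_edges_def by (simp add: conj_commute)

lemma new_arrow_vertices_root: "new_arrow_vertices V A E q v0 {r} = new_arrows"
  unfolding new_arrow_vertices_def sub_vertices_root bval_root new_arrows_def ..

lemma TX_V_root: "TX_V V A E v0 {r} = Inl ` spine_vertices"
  unfolding TX_V_def sub_vertices_root ..

lemma TX_A_root: "TX_A V A E q v0 {r} = Inl ` {r} \<union> Inr ` new_arrows"
  unfolding TX_A_def new_arrow_vertices_root ..

lemma TX_E_root: "TX_E V A E q v0 {r} = T_edges"
  unfolding TX_E_def new_arrow_vertices_root sub_edges_root T_edges_def ..

lemma new_arrows_in_spine: "y \<in> new_arrows \<Longrightarrow> y \<in> set spine"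
  unfolding new_arrows_def spine_vertices_def by simp

lemma finite_T_edges: "finite T_edges"
  unfolding T_edges_def new_arrows_def spine_vertices_def by simp

lemma T_edge_cases:
  assumes "\<epsilon> \<in> T_edges"
  obtains (spine) e where "e \<in> set (path_edges spine)" "\<epsilon> = Inl ` e"
    | (new) v where "v \<in> new_arrows" "\<epsilon> = {Inl v, Inr v}"
  using assms unfolding T_edges_def by blast

lemma T_edge_Inr: "\<epsilon> \<in> T_edges \<Longrightarrow> Inr u \<in> \<epsilon> \<Longrightarrow> \<epsilon> = {Inl u, Inr u}"
  unfolding T_edges_def by auto

lemma is_path_T_Inl:
  assumes "y \<in> set spine"
  shows "is_path T_cells T_edges (map Inl (gp y r))"
proof -
  have y: "y \<in> V \<union> A" using assms spine_subset by blast
  have "distinct (path_edges (gp y r))"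
    using gp_is_path(1)[OF y root_in_cells] unfolding is_path_def by blast
  then have "distinct (path_edges (map Inl (gp y r)))"
    unfolding path_edges_map by (simp add: distinct_map inj_on_image_Inl)
  then show ?thesis
    using gp_is_path(1)[OF y root_in_cells] gp_spine_subset[OF assms]
    unfolding is_path_def T_cells_def T_edges_def path_edges_map by auto
qed

text \<open>The new arrows are leaves, so a path between old cells never visits them.\<close>
lemma path_T_avoids_new_arrows:
  assumes "is_path T_cells T_edges p" "hd p = Inl a" "last p = Inl b"
  shows "set p \<subseteq> range Inl"
proof
  fix x assume "x \<in> set p"
  show "x \<in> range Inl"
  proof (cases x)
    case (Inr u)
    then obtain xs ys where p: "p = xs @ Inr u # ys" using \<open>x \<in> set p\<close> split_list by metis
    obtain xs' x' where xs: "xs = xs' @ [x']"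
      using p assms(2) by (cases xs rule: rev_cases) auto
    obtain y' ys' where ys: "ys = y' # ys'" using p assms(3) by (cases ys) auto
    have "path_edges p
        = path_edges (xs' @ [x']) @ {x', Inr u} # {Inr u, y'} # path_edges (y' # ys')"
      using path_edges_append[of xs' x' "Inr u # y' # ys'"] p xs ys by simp
    moreover have "{x', Inr u} = {Inr u, y'}" if "{x', Inr u} \<in> T_edges" "{Inr u, y'} \<in> T_edges"
      using T_edge_Inr[OF that(1), of u] T_edge_Inr[OF that(2), of u] by simp
    ultimately show ?thesis using assms(1) unfolding is_path_def by auto
  qed simp
qed

lemma path_T_unique:
  assumes "y \<in> set spine" "is_path T_cells T_edges p" "hd p = Inl y" "last p = Inl r"
  shows "p = map Inl (gp y r)"
proof -
  define p0 where "p0 = map projl p"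
  have p: "p = map Inl p0"
    unfolding p0_def using path_T_avoids_new_arrows[OF assms(2-4)] by (induction p) auto
  have "e \<in> set (path_edges spine)" if "e \<in> set (path_edges p0)" for e
  proof -
    have "Inl ` e \<in> T_edges"
      using that assms(2) unfolding p is_path_def path_edges_map by auto
    then show ?thesis
    proof (cases rule: T_edge_cases)
      case (spine e')
      then show ?thesis using inj_on_image_Inl[of UNIV] by (metis inj_onD UNIV_I)
    next
      case (new v)
      then show ?thesis by (metis Inl_Inr_False imageE insertCI)
    qed
  qed
  moreover have "distinct (path_edges p0)"
    using assms(2) unfolding p is_path_def path_edges_map by (simp add: distinct_map)
  moreover have "set p0 \<subseteq> V \<union> A"
    using assms(2) spine_subset unfolding p is_path_def T_cells_def by auto
  moreover have "p0 \<noteq> []" using assms(2) unfolding p is_path_def by simp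
  ultimately have "is_path (V \<union> A) E p0"
    using spine_edges_subset unfolding is_path_def by blast
  moreover have "hd p0 = y" "last p0 = r"
    using assms(3,4) \<open>p0 \<noteq> []\<close> unfolding p by (simp_all add: hd_map last_map)
  ultimately show ?thesis using gp_unique p by simp
qed

lemma gpath_T_Inl:
  assumes "y \<in> set spine"
  shows "gpath T_cells T_edges (Inl y) (Inl r) = map Inl (gp y r)"
  unfolding gpath_def[of T_cells T_edges]
proof (rule the_equality)
  have y: "y \<in> V \<union> A" using assms spine_subset by blast
  show "is_path T_cells T_edges (map Inl (gp y r)) \<and> hd (map Inl (gp y r)) = Inl y
      \<and> last (map Inl (gp y r)) = Inl r"
    using is_path_T_Inl[OF assms] gp_is_path[OF y root_in_cells]
    unfolding is_path_def by (simp add: hd_map last_map)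
qed (use path_T_unique[OF assms] in blast)

lemma path_edges_T_Inr:
  assumes "y \<in> set spine"
  shows "path_edges (Inr y # map Inl (gp y r)) = {Inl y, Inr y} # path_edges (map Inl (gp y r))"
proof -
  have "y \<in> V \<union> A" using assms spine_subset by blast
  then have eq: "map Inl (gp y r) = Inl y # map Inl (tl (gp y r))"
    using gp_Cons_tl[OF _ root_in_cells, of y] by (metis list.simps(9))
  show ?thesis unfolding eq by (simp add: insert_commute)
qed

lemma gpath_T_Inr:
  assumes "y \<in> new_arrows"
  shows "gpath T_cells T_edges (Inr y) (Inl r) = Inr y # map Inl (gp y r)"
  unfolding gpath_def[of T_cells T_edges]
proof (rule the_equality)
  have ys: "y \<in> set spine" using new_arrows_in_spine[OF assms] .
  have y: "y \<in> V \<union> A" using ys spine_subset by blast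
  have "{Inl y, Inr y} \<in> T_edges" "Inr y \<in> T_cells"
    using assms unfolding T_edges_def T_cells_def by auto
  moreover have "{Inl y, Inr y} \<notin> set (path_edges (map Inl (gp y r)))"
    unfolding path_edges_map by auto
  ultimately show "is_path T_cells T_edges (Inr y # map Inl (gp y r))
      \<and> hd (Inr y # map Inl (gp y r)) = Inr y \<and> last (Inr y # map Inl (gp y r)) = Inl r"
    using is_path_T_Inl[OF ys] gp_is_path[OF y root_in_cells]
    unfolding is_path_def path_edges_T_Inr[OF ys] by (auto simp: last_map)
next
  fix p assume p: "is_path T_cells T_edges p \<and> hd p = Inr y \<and> last p = Inl r"
  then obtain b p' where p_eq: "p = Inr y # b # p'"
    unfolding is_path_def by (metis list.collapse sum.distinct(2) last_ConsL)
  then have "{Inr y, b} \<in> T_edges" using p unfolding is_path_def by simp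
  then have "{Inr y, b} = {Inl y, Inr y}" using T_edge_Inr by simp
  then have "b = Inl y" by (auto simp: doubleton_eq_iff)
  moreover have "is_path T_cells T_edges (b # p')"
    using is_path_appendD(2)[of T_cells T_edges "[Inr y]" b p'] p p_eq by simp
  ultimately show "p = Inr y # map Inl (gp y r)"
    using path_T_unique[OF new_arrows_in_spine[OF assms]] p p_eq by simp
qed

lemma T_cells_eq: "Inl ` spine_vertices \<union> (Inl ` {r} \<union> Inr ` new_arrows) = T_cells"
  unfolding T_cells_def spine_vertices_def using root_in_spine by auto

lemma T_q_Inl: "T_q e (Inl u) = (if Inr u \<in> e then b_spine u else q (Inl -` e) u)"
  unfolding TX_q_def bval_root by simp

lemma T_q_Inr: "T_q e (Inr u) = 1"
  unfolding TX_q_def by simp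

lemma b_spine_if_new_arrow:
  assumes "u \<in> set spine"
  shows "(if u \<in> new_arrows then b_spine u else 1) = b_spine u"
  using assms off_edges_root unfolding new_arrows_def spine_vertices_def b_spine_def by auto

lemma T_edges_at_Inl_off_path:
  assumes "y \<in> set spine"
    and "Z \<subseteq> (\<lambda>v. {Inl v, Inr v}) ` new_arrows"
    and "set (path_edges \<gamma>) = image Inl ` set (path_edges (gp y r)) \<union> Z"
  shows "{\<epsilon> \<in> T_edges. Inl u \<in> \<epsilon> \<and> \<epsilon> \<notin> set (path_edges \<gamma>)}
    = image Inl ` {e \<in> set (path_edges spine). u \<in> e \<and> e \<notin> set (path_edges (gp y r))}
      \<union> (if u \<in> new_arrows \<and> {Inl u, Inr u} \<notin> Z then {{Inl u, Inr u}} else {})"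
    (is "?L = image Inl ` ?P \<union> ?N")
proof (intro equalityI subsetI)
  fix \<epsilon> assume "\<epsilon> \<in> ?L"
  then have \<epsilon>: "\<epsilon> \<in> T_edges" "Inl u \<in> \<epsilon>" "\<epsilon> \<notin> set (path_edges \<gamma>)" by auto
  from \<epsilon>(1) show "\<epsilon> \<in> image Inl ` ?P \<union> ?N"
  proof (cases rule: T_edge_cases)
    case (spine e)
    have "e \<notin> set (path_edges (gp y r))" using spine \<epsilon>(3) assms(3) by auto
    then show ?thesis using spine \<epsilon>(2) by auto
  next
    case (new v)
    then show ?thesis using \<epsilon>(2,3) assms(3) by auto
  qed
next
  fix \<epsilon> assume "\<epsilon> \<in> image Inl ` ?P \<union> ?N"
  then show "\<epsilon> \<in> ?L"
  proof
    assume "\<epsilon> \<in> image Inl ` ?P"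
    then obtain e where e: "e \<in> ?P" "\<epsilon> = Inl ` e" by blast
    have "\<epsilon> \<notin> image Inl ` set (path_edges (gp y r))"
      using e inj_on_image_Inl[of UNIV] by (auto dest: inj_onD)
    moreover have "\<epsilon> \<notin> Z" using assms(2) e by auto
    ultimately show ?thesis using e assms(3) unfolding T_edges_def by auto
  next
    assume "\<epsilon> \<in> ?N"
    then show ?thesis using assms(3) unfolding T_edges_def by (auto split: if_splits)
  qed
qed

lemma Qcell_T_Inl_general:
  assumes "y \<in> set spine"
    and "Z \<subseteq> (\<lambda>v. {Inl v, Inr v}) ` new_arrows"
    and "set (path_edges \<gamma>) = image Inl ` set (path_edges (gp y r)) \<union> Z"
  shows "Qcell T_edges T_q \<gamma> (Inl u)
    = spine_Q y u * (if u \<in> new_arrows \<and> {Inl u, Inr u} \<notin> Z then b_spine u else 1)"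
proof -
  let ?P = "{e \<in> set (path_edges spine). u \<in> e \<and> e \<notin> set (path_edges (gp y r))}"
  let ?N = "if u \<in> new_arrows \<and> {Inl u, Inr u} \<notin> Z then {{Inl u, Inr u :: 'a + 'a}} else {}"
  have "Qcell T_edges T_q \<gamma> (Inl u) = (\<Prod>\<epsilon>\<in>image Inl ` ?P. T_q \<epsilon> (Inl u)) * (\<Prod>\<epsilon>\<in>?N. T_q \<epsilon> (Inl u))"
    unfolding Qcell_def T_edges_at_Inl_off_path[OF assms] by (rule prod.union_disjoint) auto
  also have "(\<Prod>\<epsilon>\<in>image Inl ` ?P. T_q \<epsilon> (Inl u)) = (\<Prod>e\<in>?P. T_q (Inl ` e) (Inl u))"
    by (rule prod.reindex[OF inj_on_image_Inl, unfolded comp_def])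
  also have "\<dots> = spine_Q y u"
    unfolding spine_Q_def T_q_Inl by (intro prod.cong) (auto simp: inj_vimage_image_eq)
  also have "(\<Prod>\<epsilon>\<in>?N. T_q \<epsilon> (Inl u))
      = (if u \<in> new_arrows \<and> {Inl u, Inr u} \<notin> Z then b_spine u else 1)"
    unfolding T_q_Inl by simp
  finally show ?thesis .
qed

lemma Qcell_T_Inl:
  assumes "y \<in> set spine" "u \<in> set spine"
  shows "Qcell T_edges T_q (map Inl (gp y r)) (Inl u) = Qcell E q (gp y r) u"
proof -
  have "set (path_edges (map Inl (gp y r))) = image Inl ` set (path_edges (gp y r)) \<union> {}"
    unfolding path_edges_map by simp
  from Qcell_T_Inl_general[OF assms(1) _ this] show ?thesis
    using b_spine_if_new_arrow[OF assms(2)] Qcell_gp_spine[OF assms(1)] by simp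
qed

lemma Qcell_T_Inr:
  assumes "y \<in> new_arrows" "u \<in> set spine"
  shows "Qcell T_edges T_q (Inr y # map Inl (gp y r)) (Inl u)
    = (if u = y then spine_Q y y else Qcell E q (gp y r) u)"
proof -
  have y: "y \<in> set spine" using new_arrows_in_spine[OF assms(1)] .
  have "set (path_edges (Inr y # map Inl (gp y r)))
      = image Inl ` set (path_edges (gp y r)) \<union> {{Inl y, Inr y}}"
    unfolding path_edges_T_Inr[OF y] path_edges_map by auto
  from Qcell_T_Inl_general[OF y _ this] assms(1)
  have "Qcell T_edges T_q (Inr y # map Inl (gp y r)) (Inl u)
      = spine_Q y u * (if u \<in> new_arrows \<and> u \<noteq> y then b_spine u else 1)"
    by (auto simp: doubleton_eq_iff)
  then show ?thesis
    using b_spine_if_new_arrow[OF assms(2)] Qcell_gp_spine[OF y] by auto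
qed

lemma Qcell_T_new_arrow: "Qcell T_edges T_q \<gamma> (Inr y) = 1"
  unfolding Qcell_def T_q_Inr by simp

lemma T_no_chord:
  assumes "y \<in> set spine" "\<epsilon> \<in> T_edges" "\<epsilon> \<notin> set (path_edges \<gamma>)"
    and "set (path_edges (map Inl (gp y r))) \<subseteq> set (path_edges \<gamma>)"
    and "set \<gamma> \<subseteq> Inl ` set (gp y r) \<union> Inr ` Y"
    and "\<And>v. v \<in> Y \<Longrightarrow> {Inl v, Inr v} \<in> set (path_edges \<gamma>)"
    and "a \<in> set \<gamma>" "b \<in> set \<gamma>" "a \<in> \<epsilon>" "b \<in> \<epsilon>"
  shows "a = b"
  using assms(2)
proof (cases rule: T_edge_cases)
  case (spine e)
  obtain a0 b0 where ab: "a = Inl a0" "b = Inl b0" "a0 \<in> e" "b0 \<in> e"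
    using assms(9,10) spine(2) by blast
  then have "a0 \<in> set (gp y r)" "b0 \<in> set (gp y r)" using assms(5,7,8) by auto
  moreover have "e \<notin> set (path_edges (gp y r))"
    using assms(3,4) spine(2) unfolding path_edges_map by auto
  moreover have "is_path (V \<union> A) E (gp y r)"
    using gp_is_path(1) assms(1) spine_subset root_in_cells by blast
  ultimately have "a0 = b0"
    using edge_meets_path_once spine(1) spine_edges_subset ab(3,4) by blast
  then show ?thesis using ab by simp
next
  case (new v)
  show ?thesis
  proof (rule ccontr)
    assume "a \<noteq> b"
    then have "Inr v \<in> set \<gamma>" using assms(7-10) new(2) by auto
    then have "v \<in> Y" using assms(5) by auto
    then show False using assms(3,6) new(2) by blast
  qed
qed

lemma xval_T_Inl:
  assumes "y \<in> set spine"
  shows "xval (Inl ` spine_vertices) (Inl ` {r} \<union> Inr ` new_arrows) T_edges (TX_f f) T_q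
      (Inl y) (Inl r)
    = f r * path_weight y"
proof -
  let ?\<gamma> = "map Inl (gp y r) :: ('a + 'a) list"
  have "(\<Prod>\<epsilon>\<in>incident_edges T_edges ?\<gamma>. q_path T_q \<epsilon> ?\<gamma>) = (\<Prod>u\<in>set ?\<gamma>. Qcell T_edges T_q ?\<gamma> u)"
  proof (rule prod_incident_edges_eq_prod_Qcell[OF finite_T_edges])
    fix \<epsilon> a b assume h: "\<epsilon> \<in> T_edges" "\<epsilon> \<notin> set (path_edges ?\<gamma>)"
      "a \<in> set ?\<gamma>" "b \<in> set ?\<gamma>" "a \<in> \<epsilon>" "b \<in> \<epsilon>"
    show "a = b" by (rule T_no_chord[OF assms h(1,2) _ _ _ h(3-6), where Y = "{}"]) auto
  qed
  also have "\<dots> = (\<Prod>u\<in>set (gp y r). Qcell T_edges T_q ?\<gamma> (Inl u))"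
    by (simp add: prod.reindex)
  also have "\<dots> = path_weight y"
    unfolding path_weight_def using Qcell_T_Inl[OF assms] gp_spine_subset(1)[OF assms]
    by (intro prod.cong) auto
  finally show ?thesis
    unfolding xval_def T_cells_eq gpath_T_Inl[OF assms] Let_def TX_f_def by simp
qed

lemma xval_T_Inr:
  assumes "y \<in> new_arrows"
  shows "xval (Inl ` spine_vertices) (Inl ` {r} \<union> Inr ` new_arrows) T_edges (TX_f f) T_q
      (Inr y) (Inl r)
    = f r * (spine_Q y y * tail_weight y)"
proof -
  have ys: "y \<in> set spine" using new_arrows_in_spine[OF assms] .
  then have g: "gp y r = y # tl (gp y r)" using gp_Cons_tl spine_subset root_in_cells by blast
  have y_tl: "y \<notin> set (tl (gp y r))"
    using distinct_gp[of y r] ys spine_subset root_in_cells g by (metis distinct.simps(2) subsetD)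
  let ?\<gamma> = "Inr y # map Inl (gp y r) :: ('a + 'a) list"
  have "(\<Prod>\<epsilon>\<in>incident_edges T_edges ?\<gamma>. q_path T_q \<epsilon> ?\<gamma>) = (\<Prod>u\<in>set ?\<gamma>. Qcell T_edges T_q ?\<gamma> u)"
  proof (rule prod_incident_edges_eq_prod_Qcell[OF finite_T_edges])
    fix \<epsilon> a b assume h: "\<epsilon> \<in> T_edges" "\<epsilon> \<notin> set (path_edges ?\<gamma>)"
      "a \<in> set ?\<gamma>" "b \<in> set ?\<gamma>" "a \<in> \<epsilon>" "b \<in> \<epsilon>"
    show "a = b"
      by (rule T_no_chord[OF ys h(1,2) _ _ _ h(3-6), where Y = "{y}"])
        (auto simp: path_edges_T_Inr[OF ys])
  qed
  also have "\<dots> = (\<Prod>u\<in>set (gp y r). Qcell T_edges T_q ?\<gamma> (Inl u))"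
    by (simp add: prod.insert_if image_iff prod.reindex Qcell_T_new_arrow)
  also have "\<dots>
      = Qcell T_edges T_q ?\<gamma> (Inl y) * (\<Prod>u\<in>set (tl (gp y r)). Qcell T_edges T_q ?\<gamma> (Inl u))"
    using y_tl by (subst g, simp)
  also have "\<dots> = spine_Q y y * tail_weight y"
  proof -
    have "set (tl (gp y r)) \<subseteq> set spine"
      using gp_spine_subset(1)[OF ys] g by (metis set_subset_Cons subset_trans)
    then have "(\<Prod>u\<in>set (tl (gp y r)). Qcell T_edges T_q ?\<gamma> (Inl u)) = tail_weight y"
      unfolding tail_weight_def using Qcell_T_Inr[OF assms] y_tl by (intro prod.cong) auto
    then show ?thesis using Qcell_T_Inr[OF assms ys] by simp
  qed
  finally show ?thesis
    unfolding xval_def T_cells_eq gpath_T_Inr[OF assms] Let_def TX_f_def by simp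
qed

lemma valency_T_Inl:
  "valency T_edges (Inl y) = int (card (spine_edges_at y)) + (if y \<in> new_arrows then 1 else 0)"
proof -
  let ?N = "if y \<in> new_arrows then {{Inl y, Inr y :: 'a + 'a}} else {}"
  have "{\<epsilon> \<in> T_edges. Inl y \<in> \<epsilon>} = image Inl ` spine_edges_at y \<union> ?N"
    unfolding T_edges_def spine_edges_at_def by auto
  moreover have "card (image Inl ` spine_edges_at y :: ('a + 'a) set set) = card (spine_edges_at y)"
    using card_image[OF inj_on_image_Inl] .
  moreover have "{Inl y, Inr y} \<notin> image Inl ` spine_edges_at y" by auto
  moreover have "finite (spine_edges_at y)" unfolding spine_edges_at_def by simp
  ultimately show ?thesis unfolding valency_def by simp
qed

lemma valency_T_Inr:
  assumes "y \<in> new_arrows"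
  shows "valency T_edges (Inr y) = 1"
proof -
  have "{\<epsilon> \<in> T_edges. Inr y \<in> \<epsilon>} = {{Inl y, Inr y}}"
    using assms T_edge_Inr unfolding T_edges_def by blast
  then show ?thesis unfolding valency_def by simp
qed

lemma spine_term_eq_T:
  assumes "y \<in> spine_vertices"
  shows "spine_term y = path_weight y * (valency T_edges (Inl y) - 2)
    - (if y \<in> new_arrows then spine_Q y y * tail_weight y else 0)"
proof -
  have y: "y \<in> set spine" "y \<noteq> r" using assms unfolding spine_vertices_def by auto
  then have "path_weight y = spine_Q y y * b_spine y * tail_weight y"
    using path_weight_eq Qcell_gp_spine spine_subset by (metis mult.commute subsetD)
  then show ?thesis
    unfolding spine_term_eq[OF y] valency_T_Inl using assms
    by (cases "b_spine y = 1") (auto simp: new_arrows_def algebra_simps)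
qed

lemma Mval_T:
  assumes "f r = 1"
  shows "Mval (TX_V V A E v0 {r}) (TX_A V A E q v0 {r}) (TX_E V A E q v0 {r}) (TX_f f) T_q
    = - (\<Sum>c\<in>(V \<union> A) - {r}. excess c)"
proof -
  let ?A' = "Inl ` {r} \<union> Inr ` new_arrows :: ('a + 'a) set"
  let ?x = "\<lambda>v. xval (Inl ` spine_vertices) ?A' T_edges (TX_f f) T_q v (Inl r)"
  let ?h = "\<lambda>v. ?x v * (valency T_edges v - 2)"
  have A0: "A0 ?A' (TX_f f) = Inr ` new_arrows"
    unfolding A0_def TX_f_def using assms by auto
  then have "?A' - A0 ?A' (TX_f f) = {Inl r}" by auto
  then have N: "Nval (Inl ` spine_vertices) ?A' T_edges (TX_f f) T_q v = ?x v" for v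
    unfolding Nval_def by simp
  have finite_sv: "finite spine_vertices" unfolding spine_vertices_def by simp
  have new_sub: "new_arrows \<subseteq> spine_vertices" unfolding new_arrows_def by auto
  have "(\<Sum>v\<in>Inl ` spine_vertices \<union> Inr ` new_arrows. ?h v)
      = (\<Sum>v\<in>Inl ` spine_vertices. ?h v) + (\<Sum>v\<in>Inr ` new_arrows. ?h v)"
    by (rule sum.union_disjoint) (use finite_sv new_sub finite_subset in auto)
  also have "(\<Sum>v\<in>Inl ` spine_vertices. ?h v) = (\<Sum>y\<in>spine_vertices. ?h (Inl y))"
    by (rule sum.reindex_cong[of Inl]) (auto simp: inj_on_def)
  also have "(\<Sum>v\<in>Inr ` new_arrows. ?h v) = (\<Sum>y\<in>new_arrows. ?h (Inr y))"
    by (rule sum.reindex_cong[of Inr]) (auto simp: inj_on_def)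
  also have "\<dots> = (\<Sum>y\<in>spine_vertices. if y \<in> new_arrows then - (spine_Q y y * tail_weight y) else 0)"
    using xval_T_Inr valency_T_Inr assms sum.inter_filter[OF finite_sv] new_sub
    unfolding new_arrows_def by simp
  also have "(\<Sum>y\<in>spine_vertices. ?h (Inl y)) + \<dots> = (\<Sum>y\<in>spine_vertices. spine_term y)"
    unfolding sum.distrib[symmetric] using spine_term_eq_T xval_T_Inl assms
    unfolding spine_vertices_def by (intro sum.cong) auto
  finally show ?thesis
    unfolding Mval_def TX_V_root TX_A_root TX_E_root A0 N
    using sum_excess_eq_sum_spine_term by simp
qed

lemma xval_eq_path_weight:
  assumes "c \<in> V \<union> A"
  shows "xval V A E f q c r = f r * path_weight c"
proof -
  have "(\<Prod>\<epsilon>\<in>incident_edges E (gp c r). q_path q \<epsilon> (gp c r)) = path_weight c"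
    unfolding path_weight_def using finite_edges
    by (rule prod_incident_edges_eq_prod_Qcell)
      (rule edge_meets_path_once[OF gp_is_path(1)[OF assms root_in_cells]])
  then show ?thesis unfolding xval_def Let_def by simp
qed

lemma Qcell_arrow: "a \<in> A \<Longrightarrow> Qcell E q \<gamma> a = 1"
  unfolding Qcell_def using q_arrow by (intro prod.neutral) auto

lemma Qstar_eq_path_weight:
  assumes "\<beta> \<in> A" "\<beta> \<noteq> r"
  shows "Qstar E q (gp r \<beta>) = path_weight \<beta>"
proof -
  have \<beta>: "\<beta> \<in> V \<union> A" using assms by simp
  let ?g = "gp r \<beta>"
  let ?L = "length ?g"
  let ?h = "\<lambda>i. Qcell E q ?g (?g ! i)"
  have ne: "?g \<noteq> []" using gp_is_path(1)[OF root_in_cells \<beta>] unfolding is_path_def by simp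
  have first: "?g ! 0 = r" using gp_is_path(2)[OF root_in_cells \<beta>] ne by (simp add: hd_conv_nth)
  have last: "?g ! (?L - 1) = \<beta>" using gp_is_path(3)[OF root_in_cells \<beta>] ne
    by (simp add: last_conv_nth)
  have "?L \<ge> 2"
  proof (rule ccontr)
    assume "\<not> ?L \<ge> 2"
    moreover have "?L \<noteq> 0" using ne by simp
    ultimately have "?L = 1" by linarith
    then show False using first last assms(2) by simp
  qed
  have "path_weight \<beta> = (\<Prod>u\<in>set ?g. Qcell E q ?g u)"
    unfolding path_weight_def gp_rev[OF root_in_cells \<beta>] set_rev
    by (intro prod.cong[OF refl] Qcell_cong) (simp add: path_edges_rev)
  also have "\<dots> = (\<Prod>i<?L. ?h i)"
  proof -
    have "set ?g = (\<lambda>i. ?g ! i) ` {..<?L}" by (auto simp: in_set_conv_nth)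
    moreover have "inj_on (\<lambda>i. ?g ! i) {..<?L}"
      using distinct_gp[OF root_in_cells \<beta>] unfolding inj_on_def by (simp add: nth_eq_iff_index_eq)
    ultimately show ?thesis using prod.reindex[of "\<lambda>i. ?g ! i" "{..<?L}" "Qcell E q ?g"] by simp
  qed
  also have "\<dots> = ?h 0 * (?h (?L - 1) * (\<Prod>i\<in>{1..<?L - 1}. ?h i))"
  proof -
    have "{..<?L} = insert 0 (insert (?L - 1) {1..<?L - 1})" using \<open>?L \<ge> 2\<close> by auto
    then show ?thesis using \<open>?L \<ge> 2\<close> by simp
  qed
  also have "\<dots> = Qstar E q ?g"
    unfolding Qstar_def using first last Qcell_arrow root_arrow assms(1) by simp
  finally show ?thesis ..
qed

lemma Malpha_plus_Ival:
  assumes "f r = 1" "\<forall>\<beta>\<in>A - A0 A f. f \<beta> = 1"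
  shows "Malpha V A E f q r + Ival V A E f q r = - (\<Sum>c\<in>(V \<union> A) - {r}. excess c)"
proof -
  let ?live = "(A - A0 A f) - {r}"
  have split: "(V \<union> A) - {r} = (V \<union> A0 A f) \<union> ?live"
    using assms(1) root_arrow disjoint_V_A unfolding A0_def by auto
  have "Malpha V A E f q r = - (\<Sum>v\<in>V \<union> A0 A f. excess v)"
    unfolding Malpha_def excess_def
    using xval_eq_path_weight assms(1) unfolding A0_def
      by (intro arg_cong[where f = uminus] sum.cong) auto
  moreover have "Ival V A E f q r = (\<Sum>\<beta>\<in>?live. path_weight \<beta>)"
    unfolding Ival_def using Qstar_eq_path_weight assms by (intro sum.cong) auto
  moreover have "(\<Sum>\<beta>\<in>?live. excess \<beta>) = - (\<Sum>\<beta>\<in>?live. path_weight \<beta>)"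
    unfolding excess_def using valency_arrow by (simp add: sum_negf)
  moreover have "(\<Sum>c\<in>(V \<union> A) - {r}. excess c) = (\<Sum>v\<in>V \<union> A0 A f. excess v) + (\<Sum>\<beta>\<in>?live. excess \<beta>)"
    unfolding split
      by (rule sum.union_disjoint) (use finite_V finite_A disjoint_V_A in \<open>auto simp: A0_def\<close>)
  ultimately show ?thesis by simp
qed

end

theorem lemma4p11:
  fixes V A :: "'a set" and E :: "'a set set" and f :: "'a \<Rightarrow> int"
    and q :: "'a set \<Rightarrow> 'a \<Rightarrow> int" and v0 :: 'a and \<alpha> :: 'a
  assumes "decorated_pseudo_rooted_tree V A E f q v0"
    and "\<forall>\<beta>\<in>A - A0 A f. f \<beta> = 1"
    and "\<alpha> \<in> A - A0 A f"
  shows "Mval (TX_V V A E v0 {\<alpha>}) (TX_A V A E q v0 {\<alpha>}) (TX_E V A E q v0 {\<alpha>})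
              (TX_f f) (TX_q V A E q v0 {\<alpha>})
         - Malpha V A E f q \<alpha> = Ival V A E f q \<alpha>"
proof -
  interpret arrow_rooted_tree V A E f q v0 \<alpha>
    using assms(1,3) by unfold_locales simp_all
  have "f \<alpha> = 1" using assms(2,3) by blast
  then show ?thesis using Mval_T Malpha_plus_Ival[OF _ assms(2)] by simp
qed

end
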